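(* Let $\boldsymbol{\mu}=(\mu_s)_{s\ge1}$ be a fixed probability distribution on $\{1,2,\dots\}$ with $\mu_1>0$ and $\sum_{s=1}^\infty s\mu_s<\infty$, and for each $n$ let $\Pi_n\sim ESC_{[n]}(\boldsymbol{\mu})$. Then: (a) for every $s\ge1$, letting $M_{s,n}$ be the number of clusters of size $s$ in $\Pi_n$, as $n\to\infty$, $$\frac{M_{s,n}}{n}\xrightarrow{p}\frac{\mu_s}{\sum_{\ell=1}^\infty \ell\mu_\ell};$$ (b) the size of a cluster chosen uniformly at random among the clusters of $\Pi_n$ converges in distribution to $\boldsymbol{\mu}$ as $n\to\infty$.
   Context: For a fixed distribution $\boldsymbol{\mu}$ on the positive integers with $\mu_1>0$, $ESC_{[n]}(\boldsymbol{\mu})$ is the law of the following random partition of $[n]=\{1,\dots,n\}$: let $S_1,S_2,\dots$ be i.i.d. with law $\boldsymbol{\mu}$, condition on the event $E_n$ that $\sum_{j=1}^k S_j=n$ for some $k\in\mathbb{N}$, let $K$ be that unique $k$, and let $(z_1,\dots,z_n)$ be a uniformly random permutation of the vector with $S_1$ copies of $1$, ..., $S_K$ copies of $K$; the partition has blocks $\{i:z_i=j\}$, $j=1,\dots,K$ (so it has $K$ clusters of sizes $S_1,\dots,S_K$). $\xrightarrow{p}$ denotes convergence in probability. *)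

theory Defs
  imports "HOL-Probability.Probability"
begin

text \<open>Compositions of n: finite sequences (S_1,...,S_K) of positive integers summing to n
  (exactly the outcomes of (S_1,...,S_K) on the event E_n).\<close>
definition compositions :: "nat \<Rightarrow> nat list set" where
  "compositions n = {xs. (\<forall>x\<in>set xs. 1 \<le> x) \<and> sum_list xs = n}"

definition comp_weight :: "nat pmf \<Rightarrow> nat list \<Rightarrow> real" where
  "comp_weight \<mu> xs = (\<Prod>x\<leftarrow>xs. pmf \<mu> x)"

text \<open>Law of (S_1,...,S_K) conditionally on E_n: P(S_1..S_K = xs | E_n)
  = comp_weight xs / P(E_n), with P(E_n) = sum of weights over compositions of n.\<close>
definition cond_sizes :: "nat pmf \<Rightarrow> nat \<Rightarrow> nat list pmf" where
  "cond_sizes \<mu> n = embed_pmf (\<lambda>xs. if xs \<in> compositions n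
      then comp_weight \<mu> xs / (\<Sum>ys\<in>compositions n. comp_weight \<mu> ys) else 0)"

definition label_vector :: "nat list \<Rightarrow> nat list" where
  "label_vector xs = concat (map (\<lambda>j. replicate (xs ! j) (Suc j)) [0..<length xs])"

text \<open>Given sizes xs and a permutation sigma of {1..n}, z_i = v_(sigma i) is a uniformly
  random rearrangement of v; the partition has blocks {i. z_i = j}, j = 1..K.\<close>
definition partition_of :: "nat \<Rightarrow> nat list \<Rightarrow> (nat \<Rightarrow> nat) \<Rightarrow> nat set set" where
  "partition_of n xs \<sigma> =
     (\<lambda>j. {i\<in>{1..n}. label_vector xs ! (\<sigma> i - 1) = j}) ` {1..length xs}"

definition ESC :: "nat \<Rightarrow> nat pmf \<Rightarrow> nat set set pmf" where
  "ESC n \<mu> = bind_pmf (cond_sizes \<mu> n)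
     (\<lambda>xs. map_pmf (partition_of n xs) (pmf_of_set {\<sigma>. \<sigma> permutes {1..n}}))"

definition conv_in_prob_const :: "(nat \<Rightarrow> real pmf) \<Rightarrow> real \<Rightarrow> bool" where
  "conv_in_prob_const P c \<longleftrightarrow>
     (\<forall>\<epsilon>>0. (\<lambda>n. measure_pmf.prob (P n) {x. \<bar>x - c\<bar> > \<epsilon>}) \<longlonglongrightarrow> 0)"

end

theory Submission
  imports Defs "HOL-Computational_Algebra.Formal_Power_Series" "HOL-Analysis.Analysis"
begin

text \<open>On the event \<open>E\<^sub>n\<close> the cluster sizes form a composition of \<open>n\<close>, and the statistics in
  question only depend on that composition. Let \<open>u\<^sub>n = P(E\<^sub>n)\<close> and \<open>N\<^sub>A\<close> the number of parts lying
  in a set \<open>A\<close>. Generating functions express \<open>E[N\<^sub>A; E\<^sub>n]\<close> and \<open>E[N\<^sub>A (N\<^sub>A - 1) / 2; E\<^sub>n]\<close> as convolutions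
  of \<open>u\<close> with \<open>g\<^sub>A(n) = \<Sum>\<^sub>x\<^sub>\<in>\<^sub>A \<mu>\<^sub>x u\<^sub>n\<^sub>-\<^sub>x\<close>. By the renewal theorem (aperiodic since \<open>\<mu>\<^sub>1 > 0\<close>)
  \<open>u\<^sub>n \<rightarrow> 1 / E S\<close> and \<open>g\<^sub>A(n) \<rightarrow> \<mu>(A) / E S\<close>, so conditionally on \<open>E\<^sub>n\<close> the first two moments of
  \<open>N\<^sub>A / n\<close> tend to \<open>\<gamma>\<close> and \<open>\<gamma>\<^sup>2\<close> with \<open>\<gamma> = \<mu>(A) / E S\<close>: \<open>N\<^sub>A / n\<close> concentrates at \<open>\<gamma>\<close>. Part (a) is
  the case \<open>A = {s}\<close>. For (b), the probability that a uniform cluster has size \<open>k\<close> is the expected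
  fraction \<open>N\<^sub>{\<^sub>k\<^sub>} / N\<^sub>\<nat>\<close>, which by concentration of numerator and denominator is eventually at least
  \<open>\<mu>\<^sub>k - \<epsilon>\<close>; lower bounds of this kind on laws on \<open>\<nat>\<close> already force convergence of all point masses.\<close>

unbundle no vec_syntax
unbundle fps_syntax

section \<open>Compositions and the renewal sequence\<close>

lemma length_le_sum_list: "\<forall>x\<in>set xs. 1 \<le> x \<Longrightarrow> length xs \<le> sum_list (xs :: nat list)"
  by (induction xs) auto

lemma compositions_0: "compositions 0 = {[]}"
proof -
  have "xs = []" if "\<forall>x\<in>set xs. 1 \<le> x" "sum_list xs = 0" for xs :: "nat list"
    using length_le_sum_list[OF that(1)] that(2) by simp
  then show ?thesis by (auto simp: compositions_def)
qed

lemma Cons_in_compositions: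
  "x # ys \<in> compositions n \<longleftrightarrow> 1 \<le> x \<and> x \<le> n \<and> ys \<in> compositions (n - x)"
  unfolding compositions_def by auto

lemma finite_compositions: "finite (compositions n)"
proof (rule finite_subset)
  show "compositions n \<subseteq> {xs. set xs \<subseteq> {..n} \<and> length xs \<le> n}"
    unfolding compositions_def using length_le_sum_list member_le_sum_list by fastforce
  show "finite {xs. set xs \<subseteq> {..n} \<and> length xs \<le> n}"
    by (rule finite_lists_length_le) auto
qed

lemma compositions_eq_UN_Cons:
  assumes "n \<ge> 1"
  shows "compositions n = (\<Union>x\<in>{1..n}. (#) x ` compositions (n - x))"
proof
  show "compositions n \<subseteq> (\<Union>x\<in>{1..n}. (#) x ` compositions (n - x))"
  proof
    fix xs assume xs: "xs \<in> compositions n"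
    show "xs \<in> (\<Union>x\<in>{1..n}. (#) x ` compositions (n - x))"
    proof (cases xs)
      case Nil
      then show ?thesis using xs assms by (simp add: compositions_def)
    next
      case (Cons x ys)
      then show ?thesis using xs Cons_in_compositions by auto
    qed
  qed
qed (auto simp: Cons_in_compositions)

lemma sum_compositions_Cons:
  assumes "n \<ge> 1"
  shows "(\<Sum>xs\<in>compositions n. f xs) = (\<Sum>x=1..n. \<Sum>ys\<in>compositions (n - x). f (x # ys))"
proof -
  have "(\<Sum>xs\<in>compositions n. f xs) = (\<Sum>x=1..n. \<Sum>xs\<in>(#) x ` compositions (n - x). f xs)"
    unfolding compositions_eq_UN_Cons[OF assms]
    by (rule sum.UNION_disjoint) (auto simp: finite_compositions)
  also have "\<dots> = (\<Sum>x=1..n. \<Sum>ys\<in>compositions (n - x). f (x # ys))"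
    by (rule sum.cong) (auto simp: sum.reindex inj_on_def)
  finally show ?thesis .
qed

lemma comp_weight_Cons: "comp_weight \<mu> (x # ys) = pmf \<mu> x * comp_weight \<mu> ys"
  by (simp add: comp_weight_def)

lemma comp_weight_nonneg: "comp_weight \<mu> xs \<ge> 0"
  unfolding comp_weight_def by (induction xs) auto

text \<open>The renewal sequence \<open>u\<^sub>n = P(E\<^sub>n)\<close>: the probability that some partial sum hits \<open>n\<close>.\<close>

definition renewal_seq :: "nat pmf \<Rightarrow> nat \<Rightarrow> real" where
  "renewal_seq \<mu> n = (\<Sum>xs\<in>compositions n. comp_weight \<mu> xs)"

lemma renewal_seq_0: "renewal_seq \<mu> 0 = 1"
  by (simp add: renewal_seq_def compositions_0 comp_weight_def)

lemma renewal_seq_rec: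
  "n \<ge> 1 \<Longrightarrow> renewal_seq \<mu> n = (\<Sum>x=1..n. pmf \<mu> x * renewal_seq \<mu> (n - x))"
  unfolding renewal_seq_def by (simp add: sum_compositions_Cons comp_weight_Cons sum_distrib_left)

lemma renewal_seq_nonneg: "renewal_seq \<mu> n \<ge> 0"
  unfolding renewal_seq_def by (simp add: sum_nonneg comp_weight_nonneg)

lemma renewal_seq_pos:
  assumes "pmf \<mu> 1 > 0"
  shows "renewal_seq \<mu> n > 0"
proof -
  have ones: "replicate n 1 \<in> compositions n"
    by (auto simp: compositions_def sum_list_replicate)
  have "comp_weight \<mu> (replicate n 1) = pmf \<mu> 1 ^ n"
    by (induction n) (auto simp: comp_weight_def)
  then have "0 < comp_weight \<mu> (replicate n 1)" using assms by simp
  also have "\<dots> \<le> renewal_seq \<mu> n"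
    unfolding renewal_seq_def using ones
    by (intro member_le_sum) (auto simp: finite_compositions comp_weight_nonneg)
  finally show ?thesis .
qed

lemma pmf_cond_sizes:
  assumes "pmf \<mu> 1 > 0"
  shows "pmf (cond_sizes \<mu> n) xs
           = (if xs \<in> compositions n then comp_weight \<mu> xs / renewal_seq \<mu> n else 0)"
proof -
  let ?f = "\<lambda>xs. if xs \<in> compositions n then comp_weight \<mu> xs / renewal_seq \<mu> n else 0"
  have f_nonneg: "?f xs \<ge> 0" for xs
    by (simp add: comp_weight_nonneg renewal_seq_nonneg)
  have "(\<integral>\<^sup>+ x. ennreal (?f x) \<partial>count_space UNIV)
          = (\<integral>\<^sup>+ x. ennreal (?f x) * indicator (compositions n) x \<partial>count_space UNIV)"
    by (intro nn_integral_cong) (auto simp: indicator_def)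
  also have "\<dots> = (\<Sum>x\<in>compositions n. ennreal (?f x))"
    by (simp add: nn_integral_indicator_finite finite_compositions)
  also have "\<dots> = ennreal (\<Sum>x\<in>compositions n. ?f x)"
    by (rule sum_ennreal) (rule f_nonneg)
  also have "(\<Sum>x\<in>compositions n. ?f x) = 1"
    using renewal_seq_pos[OF assms, of n]
    by (simp add: sum_divide_distrib[symmetric] renewal_seq_def)
  finally have "(\<integral>\<^sup>+ x. ennreal (?f x) \<partial>count_space UNIV) = 1" by simp
  with f_nonneg show ?thesis
    unfolding cond_sizes_def renewal_seq_def[symmetric] by (subst pmf_embed_pmf) auto
qed

lemma set_pmf_cond_sizes:
  assumes "pmf \<mu> 1 > 0"
  shows "set_pmf (cond_sizes \<mu> n) \<subseteq> compositions n"
  using pmf_cond_sizes[OF assms] by (auto simp: set_pmf_eq)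

lemma prob_cond_sizes:
  assumes "pmf \<mu> 1 > 0"
  shows "measure_pmf.prob (cond_sizes \<mu> n) S
           = (\<Sum>xs\<in>compositions n \<inter> S. comp_weight \<mu> xs) / renewal_seq \<mu> n"
proof -
  have "measure_pmf.prob (cond_sizes \<mu> n) S = measure_pmf.prob (cond_sizes \<mu> n) (compositions n \<inter> S)"
    using set_pmf_cond_sizes[OF assms] by (intro measure_eq_AE) (auto simp: AE_measure_pmf_iff)
  also have "\<dots> = (\<Sum>xs\<in>compositions n \<inter> S. pmf (cond_sizes \<mu> n) xs)"
    by (simp add: measure_measure_pmf_finite finite_compositions)
  finally show ?thesis
    by (simp add: pmf_cond_sizes[OF assms] sum_divide_distrib)
qed

section \<open>Block sizes of \<open>ESC\<close> partitions\<close>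

lemma length_label_vector: "length (label_vector xs) = sum_list xs"
  unfolding label_vector_def
  by (simp add: length_concat map_map o_def sum_list_sum_nth atLeast0LessThan
      sum_set_upt_conv_sum_list_nat[symmetric])

lemma count_label_vector:
  "length (filter (\<lambda>y. y = j) (label_vector xs))
     = (if 1 \<le> j \<and> j \<le> length xs then xs ! (j - 1) else 0)"
proof -
  have "length (filter (\<lambda>y. y = j) (label_vector xs))
      = (\<Sum>i\<in>{0..<length xs}. if Suc i = j then xs ! i else 0)"
    unfolding label_vector_def
    by (simp add: filter_concat length_concat map_map o_def filter_replicate
        sum_set_upt_conv_sum_list_nat[symmetric] if_distrib[of length] cong: if_cong)
  also have "\<dots> = (\<Sum>i\<in>{0..<length xs}. if i = j - 1 \<and> j \<ge> 1 then xs ! i else 0)"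
    by (rule sum.cong) auto
  also have "\<dots> = (if 1 \<le> j \<and> j \<le> length xs then xs ! (j - 1) else 0)"
    by (cases "j \<ge> 1") (auto simp: sum.delta')
  finally show ?thesis .
qed

lemma card_filter_Suc_image:
  fixes n :: nat
  shows "card {k\<in>{1..n}. P (k - 1)} = card {p. p < n \<and> P p}"
proof -
  have "{k\<in>{1..n}. P (k - 1)} = Suc ` {p. p < n \<and> P p}"
  proof safe
    fix k assume "k \<in> {1..n}" "P (k - 1)"
    then show "k \<in> Suc ` {p. p < n \<and> P p}" by (intro image_eqI[of _ _ "k - 1"]) auto
  qed auto
  then show ?thesis by (simp add: card_image)
qed

lemma card_permuted_filter:
  fixes \<sigma> :: "nat \<Rightarrow> nat"
  assumes "\<sigma> permutes {1..n}"
  shows "card {i\<in>{1..n}. P (\<sigma> i - 1)} = card {p. p < n \<and> P p}"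
proof -
  have "\<sigma> ` {i\<in>{1..n}. P (\<sigma> i - 1)} = {k\<in>\<sigma> ` {1..n}. P (k - 1)}" by blast
  also have "\<dots> = {k\<in>{1..n}. P (k - 1)}" unfolding permutes_image[OF assms] ..
  moreover have "inj_on \<sigma> {i\<in>{1..n}. P (\<sigma> i - 1)}"
    by (rule inj_on_subset[OF permutes_inj_on[OF assms]]) auto
  ultimately have "card {i\<in>{1..n}. P (\<sigma> i - 1)} = card {k\<in>{1..n}. P (k - 1)}"
    using card_image by fastforce
  with card_filter_Suc_image[of n P] show ?thesis by simp
qed

definition block :: "nat \<Rightarrow> nat list \<Rightarrow> (nat \<Rightarrow> nat) \<Rightarrow> nat \<Rightarrow> nat set" where
  "block n xs \<sigma> j = {i\<in>{1..n}. label_vector xs ! (\<sigma> i - 1) = j}"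

lemma partition_of_eq_image_block: "partition_of n xs \<sigma> = block n xs \<sigma> ` {1..length xs}"
  unfolding partition_of_def block_def ..

lemma card_block:
  assumes "xs \<in> compositions n" "\<sigma> permutes {1..n}" "j \<in> {1..length xs}"
  shows "card (block n xs \<sigma> j) = xs ! (j - 1)"
proof -
  have len: "length (label_vector xs) = n"
    using assms(1) by (simp add: length_label_vector compositions_def)
  have "card (block n xs \<sigma> j) = card {p. p < n \<and> label_vector xs ! p = j}"
    unfolding block_def by (rule card_permuted_filter[OF assms(2), of "\<lambda>p. label_vector xs ! p = j"])
  also have "\<dots> = length (filter (\<lambda>y. y = j) (label_vector xs))"
    by (simp add: length_filter_conv_card len)
  finally show ?thesis using assms(3) by (simp add: count_label_vector)
qed

lemma inj_on_block:
  assumes "xs \<in> compositions n" "\<sigma> permutes {1..n}"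
  shows "inj_on (block n xs \<sigma>) {1..length xs}"
proof
  fix j j' assume j: "j \<in> {1..length xs}" and j': "j' \<in> {1..length xs}"
    and eq: "block n xs \<sigma> j = block n xs \<sigma> j'"
  have "xs ! (j - 1) \<ge> 1"
    using j assms(1) by (auto simp: compositions_def)
  then have "block n xs \<sigma> j \<noteq> {}"
    using card_block[OF assms j] by (metis card.empty not_one_le_zero)
  then obtain i where "i \<in> block n xs \<sigma> j" "i \<in> block n xs \<sigma> j'"
    using eq by auto
  then show "j = j'" unfolding block_def by auto
qed

lemma card_blocks_with:
  assumes "xs \<in> compositions n" "\<sigma> permutes {1..n}"
  shows "card {B\<in>partition_of n xs \<sigma>. P (card B)} = length (filter P xs)"
proof -
  have "{B\<in>partition_of n xs \<sigma>. P (card B)}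
          = block n xs \<sigma> ` {j\<in>{1..length xs}. P (xs ! (j - 1))}"
    unfolding partition_of_eq_image_block using card_block[OF assms] by auto
  moreover have "inj_on (block n xs \<sigma>) {j\<in>{1..length xs}. P (xs ! (j - 1))}"
    by (rule inj_on_subset[OF inj_on_block[OF assms]]) auto
  ultimately have "card {B\<in>partition_of n xs \<sigma>. P (card B)} = card {j\<in>{1..length xs}. P (xs ! (j - 1))}"
    by (simp add: card_image)
  also have "\<dots> = card {i. i < length xs \<and> P (xs ! i)}"
    by (rule card_filter_Suc_image[of "length xs" "\<lambda>i. P (xs ! i)"])
  also have "\<dots> = length (filter P xs)"
    by (simp add: length_filter_conv_card)
  finally show ?thesis .
qed

lemma card_partition_of:
  assumes "xs \<in> compositions n" "\<sigma> permutes {1..n}"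
  shows "card (partition_of n xs \<sigma>) = length xs"
  using card_blocks_with[OF assms, of "\<lambda>_. True"] by simp

lemma set_pmf_of_permutations:
  "finite S \<Longrightarrow> set_pmf (pmf_of_set {\<sigma>. \<sigma> permutes S}) = {\<sigma>. \<sigma> permutes S}"
  by (rule set_pmf_of_set) (auto simp: finite_permutations intro: permutes_id)

lemma map_pmf_ESC:
  assumes "pmf \<mu> 1 > 0"
    and "\<And>xs \<sigma>. xs \<in> compositions n \<Longrightarrow> \<sigma> permutes {1..n} \<Longrightarrow> h (partition_of n xs \<sigma>) = g xs"
  shows "map_pmf h (ESC n \<mu>) = map_pmf g (cond_sizes \<mu> n)"
proof -
  have "map_pmf h (ESC n \<mu>) = bind_pmf (cond_sizes \<mu> n)
      (\<lambda>xs. map_pmf (h \<circ> partition_of n xs) (pmf_of_set {\<sigma>. \<sigma> permutes {1..n}}))"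
    unfolding ESC_def map_bind_pmf by (simp add: pmf.map_comp)
  also have "\<dots> = bind_pmf (cond_sizes \<mu> n) (\<lambda>xs. return_pmf (g xs))"
  proof (rule bind_pmf_cong)
    fix xs assume "xs \<in> set_pmf (cond_sizes \<mu> n)"
    then have "xs \<in> compositions n" using set_pmf_cond_sizes[OF assms(1)] by blast
    then have "map_pmf (h \<circ> partition_of n xs) (pmf_of_set {\<sigma>. \<sigma> permutes {1..n}})
        = map_pmf (\<lambda>_. g xs) (pmf_of_set {\<sigma>. \<sigma> permutes {1..n}})"
      by (intro map_pmf_cong) (auto simp: set_pmf_of_permutations assms(2))
    then show "map_pmf (h \<circ> partition_of n xs) (pmf_of_set {\<sigma>. \<sigma> permutes {1..n}})
                 = return_pmf (g xs)"
      by simp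
  qed simp
  finally show ?thesis by (simp add: map_pmf_def)
qed

lemma pmf_card_uniform_block:
  assumes "xs \<in> compositions n" "\<sigma> permutes {1..n}" "n \<ge> 1"
  shows "pmf (map_pmf card (pmf_of_set (partition_of n xs \<sigma>))) k
           = real (length (filter (\<lambda>x. x = k) xs)) / real (length xs)"
proof -
  have fin: "finite (partition_of n xs \<sigma>)" by (simp add: partition_of_def)
  have nonempty: "partition_of n xs \<sigma> \<noteq> {}"
    using card_partition_of[OF assms(1,2)] assms by (auto simp: compositions_def)
  have "pmf (map_pmf card (pmf_of_set (partition_of n xs \<sigma>))) k
      = card (partition_of n xs \<sigma> \<inter> card -` {k}) / card (partition_of n xs \<sigma>)"
    by (simp add: pmf_map measure_pmf_of_set[OF nonempty fin])
  also have "partition_of n xs \<sigma> \<inter> card -` {k} = {B\<in>partition_of n xs \<sigma>. card B = k}"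
    by auto
  finally show ?thesis
    using card_blocks_with[OF assms(1,2), of "\<lambda>x. x = k"] card_partition_of[OF assms(1,2)] by simp
qed

lemma pmf_uniform_cluster_size:
  assumes "pmf \<mu> 1 > 0" "n \<ge> 1"
  shows "pmf (bind_pmf (ESC n \<mu>) (\<lambda>Q. map_pmf card (pmf_of_set Q))) k
       = measure_pmf.expectation (cond_sizes \<mu> n)
           (\<lambda>xs. real (length (filter (\<lambda>x. x = k) xs)) / real (length xs))"
proof -
  let ?Perm = "pmf_of_set {\<sigma>. \<sigma> permutes {1..n}}"
  let ?frac = "\<lambda>xs. real (length (filter (\<lambda>x. x = k) xs)) / real (length xs)"
  have "pmf (bind_pmf (ESC n \<mu>) (\<lambda>Q. map_pmf card (pmf_of_set Q))) k
      = measure_pmf.expectation (cond_sizes \<mu> n)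
          (\<lambda>xs. measure_pmf.expectation ?Perm
             (\<lambda>\<sigma>. pmf (map_pmf card (pmf_of_set (partition_of n xs \<sigma>))) k))"
    unfolding ESC_def by (simp add: bind_assoc_pmf bind_map_pmf pmf_bind)
  also have "\<dots> = measure_pmf.expectation (cond_sizes \<mu> n) ?frac"
  proof (rule integral_cong_AE)
    show "AE xs in measure_pmf (cond_sizes \<mu> n). measure_pmf.expectation ?Perm
            (\<lambda>\<sigma>. pmf (map_pmf card (pmf_of_set (partition_of n xs \<sigma>))) k) = ?frac xs"
    proof (rule AE_pmfI)
      fix xs assume "xs \<in> set_pmf (cond_sizes \<mu> n)"
      then have xs: "xs \<in> compositions n" using set_pmf_cond_sizes[OF assms(1)] by blast
      have "measure_pmf.expectation ?Perm
              (\<lambda>\<sigma>. pmf (map_pmf card (pmf_of_set (partition_of n xs \<sigma>))) k)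
            = measure_pmf.expectation ?Perm (\<lambda>_. ?frac xs)"
        by (rule integral_cong_AE)
           (auto intro!: AE_pmfI simp: set_pmf_of_permutations pmf_card_uniform_block[OF xs _ assms(2)])
      then show "measure_pmf.expectation ?Perm
              (\<lambda>\<sigma>. pmf (map_pmf card (pmf_of_set (partition_of n xs \<sigma>))) k) = ?frac xs"
        by simp
    qed
  qed auto
  finally show ?thesis .
qed

section \<open>Generating functions\<close>

definition count_parts :: "nat set \<Rightarrow> nat list \<Rightarrow> nat" where
  "count_parts A xs = length (filter (\<lambda>x. x \<in> A) xs)"

fun count_part_pairs :: "nat set \<Rightarrow> nat list \<Rightarrow> nat" where
  "count_part_pairs A [] = 0"
| "count_part_pairs A (x # ys) = (if x \<in> A then count_parts A ys else 0) + count_part_pairs A ys"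

lemma count_parts_Nil [simp]: "count_parts A [] = 0"
  by (simp add: count_parts_def)

lemma count_parts_Cons: "count_parts A (x # ys) = (if x \<in> A then 1 else 0) + count_parts A ys"
  by (simp add: count_parts_def)

lemma count_parts_squared: "(count_parts A xs)\<^sup>2 = count_parts A xs + 2 * count_part_pairs A xs"
  by (induction xs) (auto simp: count_parts_Cons power2_eq_square algebra_simps)

text \<open>\<open>count_moment \<mu> A n\<close> and \<open>pair_moment \<mu> A n\<close> are the expectations of the number of parts
  in \<open>A\<close> and of the number of pairs of such parts on the event \<open>E\<^sub>n\<close>; \<open>restricted_renewal \<mu> A n\<close>
  is the probability that the first part lies in \<open>A\<close> and \<open>n\<close> is hit.\<close>

definition count_moment :: "nat pmf \<Rightarrow> nat set \<Rightarrow> nat \<Rightarrow> real" where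
  "count_moment \<mu> A n = (\<Sum>xs\<in>compositions n. comp_weight \<mu> xs * real (count_parts A xs))"

definition pair_moment :: "nat pmf \<Rightarrow> nat set \<Rightarrow> nat \<Rightarrow> real" where
  "pair_moment \<mu> A n = (\<Sum>xs\<in>compositions n. comp_weight \<mu> xs * real (count_part_pairs A xs))"

definition restricted_renewal :: "nat pmf \<Rightarrow> nat set \<Rightarrow> nat \<Rightarrow> real" where
  "restricted_renewal \<mu> A n = (\<Sum>x=0..n. (if x \<in> A then pmf \<mu> x else 0) * renewal_seq \<mu> (n - x))"

definition tail_prob :: "nat pmf \<Rightarrow> nat \<Rightarrow> real" where
  "tail_prob \<mu> k = 1 - (\<Sum>j\<le>k. pmf \<mu> j)"

lemma sum_atLeast0_eq_sum_atLeast1: "f 0 = 0 \<Longrightarrow> (\<Sum>i=0..(n::nat). f i) = (\<Sum>i=1..n. (f i :: real))"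
  by (simp add: sum.atLeast_Suc_atMost)

lemma real_count_parts_Cons:
  "real (count_parts A (x # ys)) = (if x \<in> A then 1 else 0) + real (count_parts A ys)"
  by (simp add: count_parts_def)

lemma real_count_part_pairs_Cons:
  "real (count_part_pairs A (x # ys))
     = (if x \<in> A then real (count_parts A ys) else 0) + real (count_part_pairs A ys)"
  by simp

context
  fixes \<mu> :: "nat pmf"
  assumes no_size_zero: "pmf \<mu> 0 = 0"
begin

lemma renewal_fps: "Abs_fps (renewal_seq \<mu>) = 1 + Abs_fps (pmf \<mu>) * Abs_fps (renewal_seq \<mu>)"
proof (rule fps_ext)
  fix n
  show "Abs_fps (renewal_seq \<mu>) $ n = (1 + Abs_fps (pmf \<mu>) * Abs_fps (renewal_seq \<mu>)) $ n"
  proof (cases "n = 0")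
    case True
    then show ?thesis by (simp add: renewal_seq_0 no_size_zero)
  next
    case False
    then have "renewal_seq \<mu> n = (\<Sum>x=1..n. pmf \<mu> x * renewal_seq \<mu> (n - x))"
      by (intro renewal_seq_rec) simp
    also have "\<dots> = (\<Sum>x=0..n. pmf \<mu> x * renewal_seq \<mu> (n - x))"
      by (rule sum_atLeast0_eq_sum_atLeast1[symmetric]) (simp add: no_size_zero)
    finally show ?thesis using False by (simp add: fps_mult_nth)
  qed
qed

lemma renewal_fps_mult_one_minus: "Abs_fps (renewal_seq \<mu>) * (1 - Abs_fps (pmf \<mu>)) = 1"
proof -
  have "Abs_fps (renewal_seq \<mu>) * (1 - Abs_fps (pmf \<mu>))
          = Abs_fps (renewal_seq \<mu>) - Abs_fps (pmf \<mu>) * Abs_fps (renewal_seq \<mu>)"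
    by (simp add: algebra_simps)
  also have "\<dots> = 1" by (metis renewal_fps add_diff_cancel_right')
  finally show ?thesis .
qed

lemma fps_eq_renewal_solution:
  assumes "F = G + Abs_fps (pmf \<mu>) * F"
  shows "F = Abs_fps (renewal_seq \<mu>) * G"
proof -
  have "F - Abs_fps (pmf \<mu>) * F = G" by (metis assms add_diff_cancel_right')
  then have "F * (1 - Abs_fps (pmf \<mu>)) = G" by (simp add: algebra_simps)
  then have "Abs_fps (renewal_seq \<mu>) * (F * (1 - Abs_fps (pmf \<mu>))) = Abs_fps (renewal_seq \<mu>) * G"
    by simp
  also have "Abs_fps (renewal_seq \<mu>) * (F * (1 - Abs_fps (pmf \<mu>)))
               = F * (Abs_fps (renewal_seq \<mu>) * (1 - Abs_fps (pmf \<mu>)))"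
    by (simp add: algebra_simps)
  finally show ?thesis by (simp add: renewal_fps_mult_one_minus)
qed

lemma restricted_renewal_fps:
  "Abs_fps (restricted_renewal \<mu> A)
     = Abs_fps (\<lambda>k. if k \<in> A then pmf \<mu> k else 0) * Abs_fps (renewal_seq \<mu>)"
  by (simp add: fps_eq_iff fps_mult_nth restricted_renewal_def)

lemma count_moment_fps:
  "Abs_fps (count_moment \<mu> A)
     = Abs_fps (\<lambda>k. if k \<in> A then pmf \<mu> k else 0) * Abs_fps (renewal_seq \<mu>)
       + Abs_fps (pmf \<mu>) * Abs_fps (count_moment \<mu> A)"
proof (rule fps_ext)
  fix n
  show "Abs_fps (count_moment \<mu> A) $ n = (Abs_fps (\<lambda>k. if k \<in> A then pmf \<mu> k else 0)
          * Abs_fps (renewal_seq \<mu>) + Abs_fps (pmf \<mu>) * Abs_fps (count_moment \<mu> A)) $ n"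
  proof (cases "n = 0")
    case True
    then show ?thesis by (simp add: count_moment_def compositions_0 no_size_zero)
  next
    case False
    have "count_moment \<mu> A n = (\<Sum>x=1..n. \<Sum>ys\<in>compositions (n - x). pmf \<mu> x
            * comp_weight \<mu> ys * ((if x \<in> A then 1 else 0) + real (count_parts A ys)))"
      unfolding count_moment_def using False
      by (simp add: sum_compositions_Cons comp_weight_Cons real_count_parts_Cons)
    also have "\<dots> = (\<Sum>x=1..n. (if x \<in> A then pmf \<mu> x else 0) * renewal_seq \<mu> (n - x)
                      + pmf \<mu> x * count_moment \<mu> A (n - x))"
      by (rule sum.cong)
         (auto simp: renewal_seq_def count_moment_def sum_distrib_left sum.distrib algebra_simps)
    also have "\<dots> = (\<Sum>x=0..n. (if x \<in> A then pmf \<mu> x else 0) * renewal_seq \<mu> (n - x)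
                      + pmf \<mu> x * count_moment \<mu> A (n - x))"
      by (rule sum_atLeast0_eq_sum_atLeast1[symmetric]) (simp add: no_size_zero)
    finally show ?thesis by (simp add: fps_mult_nth sum.distrib)
  qed
qed

lemma pair_moment_fps:
  "Abs_fps (pair_moment \<mu> A)
     = Abs_fps (\<lambda>k. if k \<in> A then pmf \<mu> k else 0) * Abs_fps (count_moment \<mu> A)
       + Abs_fps (pmf \<mu>) * Abs_fps (pair_moment \<mu> A)"
proof (rule fps_ext)
  fix n
  show "Abs_fps (pair_moment \<mu> A) $ n = (Abs_fps (\<lambda>k. if k \<in> A then pmf \<mu> k else 0)
          * Abs_fps (count_moment \<mu> A) + Abs_fps (pmf \<mu>) * Abs_fps (pair_moment \<mu> A)) $ n"
  proof (cases "n = 0")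
    case True
    then show ?thesis by (simp add: pair_moment_def compositions_0 no_size_zero)
  next
    case False
    have "pair_moment \<mu> A n = (\<Sum>x=1..n. \<Sum>ys\<in>compositions (n - x). pmf \<mu> x * comp_weight \<mu> ys
           * ((if x \<in> A then real (count_parts A ys) else 0) + real (count_part_pairs A ys)))"
      unfolding pair_moment_def using False
      by (simp del: count_part_pairs.simps
          add: sum_compositions_Cons comp_weight_Cons real_count_part_pairs_Cons)
    also have "\<dots> = (\<Sum>x=1..n. (if x \<in> A then pmf \<mu> x else 0) * count_moment \<mu> A (n - x)
                      + pmf \<mu> x * pair_moment \<mu> A (n - x))"
      by (rule sum.cong)
         (auto simp: pair_moment_def count_moment_def sum_distrib_left sum.distrib algebra_simps)
    also have "\<dots> = (\<Sum>x=0..n. (if x \<in> A then pmf \<mu> x else 0) * count_moment \<mu> A (n - x)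
                      + pmf \<mu> x * pair_moment \<mu> A (n - x))"
      by (rule sum_atLeast0_eq_sum_atLeast1[symmetric]) (simp add: no_size_zero)
    finally show ?thesis by (simp add: fps_mult_nth sum.distrib)
  qed
qed

text \<open>Cutting a composition at a part lying in \<open>A\<close> yields the two convolution formulas.\<close>

lemma count_moment_fps_solution:
  "Abs_fps (count_moment \<mu> A) = Abs_fps (renewal_seq \<mu>) * Abs_fps (restricted_renewal \<mu> A)"
  unfolding restricted_renewal_fps by (rule fps_eq_renewal_solution[OF count_moment_fps])

lemma count_moment_conv:
  "count_moment \<mu> A n = (\<Sum>i=0..n. renewal_seq \<mu> i * restricted_renewal \<mu> A (n - i))"
  using arg_cong[OF count_moment_fps_solution, of "\<lambda>F. F $ n"] by (simp add: fps_mult_nth)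

lemma pair_moment_conv:
  "pair_moment \<mu> A n = (\<Sum>i=0..n. count_moment \<mu> A i * restricted_renewal \<mu> A (n - i))"
proof -
  have "Abs_fps (pair_moment \<mu> A) = Abs_fps (renewal_seq \<mu>)
          * (Abs_fps (\<lambda>k. if k \<in> A then pmf \<mu> k else 0) * Abs_fps (count_moment \<mu> A))"
    by (rule fps_eq_renewal_solution[OF pair_moment_fps])
  also have "\<dots> = Abs_fps (count_moment \<mu> A) * Abs_fps (restricted_renewal \<mu> A)"
    by (simp add: count_moment_fps_solution restricted_renewal_fps algebra_simps)
  finally have "Abs_fps (pair_moment \<mu> A) = Abs_fps (count_moment \<mu> A) * Abs_fps (restricted_renewal \<mu> A)" .
  from arg_cong[OF this, of "\<lambda>F. F $ n"] show ?thesis by (simp add: fps_mult_nth)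
qed

text \<open>The probabilistic content: the last renewal before time \<open>n\<close> is at some \<open>n - k\<close>, after which
  the next part exceeds \<open>k\<close>.\<close>

lemma renewal_identity: "(\<Sum>k=0..n. tail_prob \<mu> k * renewal_seq \<mu> (n - k)) = 1"
proof -
  define H where "H = Abs_fps (tail_prob \<mu>) * Abs_fps (renewal_seq \<mu>)"
  have tail_fps: "(1 - fps_X) * Abs_fps (tail_prob \<mu>) = 1 - Abs_fps (pmf \<mu>)"
  proof (rule fps_ext)
    fix n
    show "((1 - fps_X) * Abs_fps (tail_prob \<mu>)) $ n = (1 - Abs_fps (pmf \<mu>)) $ n"
      by (cases n) (simp_all add: tail_prob_def no_size_zero algebra_simps)
  qed
  have "H * (1 - fps_X) = Abs_fps (renewal_seq \<mu>) * ((1 - fps_X) * Abs_fps (tail_prob \<mu>))"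
    by (simp add: H_def algebra_simps)
  also have "\<dots> = 1" by (simp add: tail_fps renewal_fps_mult_one_minus)
  finally have H: "H * (1 - fps_X) = 1" .
  have "H $ n = 1"
  proof (induction n)
    case 0
    show ?case using arg_cong[OF H, of "\<lambda>F. F $ 0"] by simp
  next
    case (Suc n)
    show ?case using arg_cong[OF H, of "\<lambda>F. F $ Suc n"] Suc by (simp add: algebra_simps)
  qed
  then show ?thesis by (simp add: H_def fps_mult_nth)
qed

end

section \<open>Tail probabilities\<close>

lemma sum_pmf_le_1: "finite S \<Longrightarrow> (\<Sum>x\<in>S. pmf \<mu> x) \<le> 1"
  using measure_measure_pmf_finite[of S \<mu>] measure_pmf.prob_le_1[of \<mu> S] by simp

lemma tail_prob_nonneg: "tail_prob \<mu> k \<ge> 0"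
  unfolding tail_prob_def using sum_pmf_le_1[of "{..k}" \<mu>] by simp

lemma tail_prob_Suc: "tail_prob \<mu> (Suc k) = tail_prob \<mu> k - pmf \<mu> (Suc k)"
  by (simp add: tail_prob_def)

lemma sum_pmf_greaterThanAtMost_le: "(\<Sum>x\<in>{J<..M}. pmf \<mu> x) \<le> tail_prob \<mu> J"
proof -
  have "(\<Sum>x\<le>J. pmf \<mu> x) + (\<Sum>x\<in>{J<..M}. pmf \<mu> x) = (\<Sum>x\<in>{..J} \<union> {J<..M}. pmf \<mu> x)"
    by (rule sum.union_disjoint[symmetric]) auto
  also have "\<dots> \<le> 1" by (rule sum_pmf_le_1) simp
  finally show ?thesis by (simp add: tail_prob_def)
qed

lemma sum_pmf_atMost_tendsto: "(\<lambda>k. \<Sum>j\<le>k. pmf \<mu> j) \<longlonglongrightarrow> 1"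
proof -
  have "(\<lambda>k. measure_pmf.prob \<mu> {..k}) \<longlonglongrightarrow> measure_pmf.prob \<mu> (\<Union>k. {..k})"
    by (rule measure_pmf.finite_Lim_measure_incseq) (auto simp: incseq_def)
  moreover have "(\<Union>k. {..k::nat}) = UNIV" by auto
  ultimately show ?thesis by (simp add: measure_measure_pmf_finite)
qed

lemma tail_prob_tendsto_0: "tail_prob \<mu> \<longlonglongrightarrow> 0"
  unfolding tail_prob_def using tendsto_diff[OF tendsto_const[of 1] sum_pmf_atMost_tendsto] by simp

lemma pmf_sums_1: "pmf \<mu> sums 1"
  unfolding sums_def
  by (rule LIMSEQ_imp_Suc) (use sum_pmf_atMost_tendsto in \<open>simp add: lessThan_Suc_atMost\<close>)

lemma tail_prob_eq_suminf: "tail_prob \<mu> n = (\<Sum>j. pmf \<mu> (j + Suc n))"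
proof -
  have "1 = (\<Sum>j. pmf \<mu> (j + Suc n)) + (\<Sum>i<Suc n. pmf \<mu> i)"
    using suminf_split_initial_segment[OF sums_summable[OF pmf_sums_1[of \<mu>]], of "Suc n"]
      sums_unique[OF pmf_sums_1[of \<mu>]]
    by simp
  then show ?thesis by (simp add: tail_prob_def lessThan_Suc_atMost)
qed

lemma mult_tail_prob_tendsto_0:
  assumes summ: "summable (\<lambda>s. real s * pmf \<mu> s)"
  shows "(\<lambda>n. real n * tail_prob \<mu> n) \<longlonglongrightarrow> 0"
proof -
  define t where "t n = (\<Sum>j. real (j + Suc n) * pmf \<mu> (j + Suc n))" for n
  have t: "t n = (\<Sum>s. real s * pmf \<mu> s) - (\<Sum>i<Suc n. real i * pmf \<mu> i)" for n
    using suminf_split_initial_segment[OF summ, of "Suc n"] unfolding t_def by simp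
  have "(\<lambda>n. \<Sum>i<Suc n. real i * pmf \<mu> i) \<longlonglongrightarrow> (\<Sum>s. real s * pmf \<mu> s)"
    using summable_LIMSEQ[OF summ] by (rule LIMSEQ_Suc)
  then have t_tendsto: "t \<longlonglongrightarrow> 0"
    unfolding t using tendsto_diff[OF tendsto_const[of "\<Sum>s. real s * pmf \<mu> s"]] by fastforce
  have "real n * tail_prob \<mu> n \<le> t n" for n
  proof -
    have tail_summable: "summable (\<lambda>j. pmf \<mu> (j + Suc n))"
      using summable_ignore_initial_segment[OF sums_summable[OF pmf_sums_1[of \<mu>]]] .
    have "real n * tail_prob \<mu> n = (\<Sum>j. real n * pmf \<mu> (j + Suc n))"
      unfolding tail_prob_eq_suminf by (rule suminf_mult[OF tail_summable, symmetric])
    also have "\<dots> \<le> t n"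
      unfolding t_def
      by (rule suminf_le)
         (auto intro!: mult_right_mono summable_mult tail_summable tail_summable[simplified]
           summable_ignore_initial_segment[OF summ, of "Suc n", simplified])
    finally show ?thesis .
  qed
  then show ?thesis
    by (intro tendsto_sandwich[OF _ _ tendsto_const t_tendsto])
       (auto intro!: always_eventually mult_nonneg_nonneg tail_prob_nonneg)
qed

lemma sum_tail_prob_lessThan:
  "(\<Sum>k<n. tail_prob \<mu> k) = (\<Sum>s\<le>n. real s * pmf \<mu> s) + real n * tail_prob \<mu> n"
  by (induction n) (simp_all add: tail_prob_Suc algebra_simps)

lemma tail_prob_sums_mean:
  assumes summ: "summable (\<lambda>s. real s * pmf \<mu> s)"
  shows "tail_prob \<mu> sums (\<Sum>s. real s * pmf \<mu> s)"
  using tendsto_add[OF summable_LIMSEQ'[OF summ] mult_tail_prob_tendsto_0[OF summ]]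
  unfolding sums_def sum_tail_prob_lessThan by simp

lemma renewal_seq_le_1:
  assumes "pmf \<mu> 0 = 0"
  shows "renewal_seq \<mu> n \<le> 1"
proof -
  have "tail_prob \<mu> 0 * renewal_seq \<mu> (n - 0) \<le> (\<Sum>k=0..n. tail_prob \<mu> k * renewal_seq \<mu> (n - k))"
    by (rule member_le_sum) (auto intro!: mult_nonneg_nonneg tail_prob_nonneg renewal_seq_nonneg)
  moreover have "tail_prob \<mu> 0 = 1" by (simp add: tail_prob_def assms)
  ultimately show ?thesis by (simp add: renewal_identity[OF assms])
qed

lemma renewal_seq_rec_split:
  "M \<ge> 1 \<Longrightarrow> renewal_seq \<mu> M
     = pmf \<mu> 1 * renewal_seq \<mu> (M - 1) + (\<Sum>x=2..M. pmf \<mu> x * renewal_seq \<mu> (M - x))"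
  by (simp add: renewal_seq_rec sum.atLeast_Suc_atMost numeral_2_eq_2)

lemma sum_pmf_from_2_le: "(\<Sum>x=2..(M::nat). pmf \<mu> x) \<le> 1 - pmf \<mu> 1"
proof -
  have "pmf \<mu> 1 + (\<Sum>x=2..M. pmf \<mu> x) = (\<Sum>x\<in>insert 1 {2..M}. pmf \<mu> x)" by simp
  also have "\<dots> \<le> 1" by (rule sum_pmf_le_1) simp
  finally show ?thesis by simp
qed

lemma sum_pmf_from_2_ge:
  assumes "pmf \<mu> 0 = 0" "J \<ge> 1"
  shows "(\<Sum>x=2..J. pmf \<mu> x) \<ge> 1 - pmf \<mu> 1 - tail_prob \<mu> J"
proof -
  have "{..J} = insert 0 (insert 1 {2..J})" using assms(2) by auto
  then have "(\<Sum>x\<le>J. pmf \<mu> x) = pmf \<mu> 0 + (pmf \<mu> 1 + (\<Sum>x=2..J. pmf \<mu> x))" by simp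
  then show ?thesis by (simp add: tail_prob_def assms(1))
qed

section \<open>The renewal theorem\<close>

lemma bounded_seq_limsup_bounds:
  fixes f :: "nat \<Rightarrow> real"
  assumes "bdd_above (range f)" "bdd_below (range f)"
  obtains L where "\<forall>\<epsilon>>0. eventually (\<lambda>n. f n < L + \<epsilon>) sequentially"
    and "\<forall>\<epsilon>>0. frequently (\<lambda>n. f n > L - \<epsilon>) sequentially"
proof -
  define T where "T N = (SUP n\<in>{N..}. f n)" for N
  have bdd: "bdd_above (f ` {N..})" for N
    using assms(1) by (rule bdd_above_mono) auto
  have T_ge: "f n \<le> T N" if "n \<ge> N" for n N
    unfolding T_def using that bdd by (intro cSUP_upper) auto
  obtain m where m: "\<And>n. m \<le> f n" using assms(2) by (auto simp: bdd_below_def)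
  have "m \<le> T N" for N using T_ge[of N N] m[of N] by linarith
  then have bdd_T: "bdd_below (range T)" by (auto intro: bdd_belowI[of _ m])
  define L where "L = (INF N. T N)"
  show ?thesis
  proof
    show "\<forall>\<epsilon>>0. eventually (\<lambda>n. f n < L + \<epsilon>) sequentially"
    proof (intro allI impI)
      fix \<epsilon> :: real assume "\<epsilon> > 0"
      then have "(INF N. T N) < L + \<epsilon>" by (simp add: L_def)
      then obtain N where "T N < L + \<epsilon>" using bdd_T by (subst (asm) cINF_less_iff) auto
      then show "eventually (\<lambda>n. f n < L + \<epsilon>) sequentially"
        unfolding eventually_sequentially using T_ge by (meson le_less_trans)
    qed
    show "\<forall>\<epsilon>>0. frequently (\<lambda>n. f n > L - \<epsilon>) sequentially"
    proof (intro allI impI)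
      fix \<epsilon> :: real assume "\<epsilon> > 0"
      have "L - \<epsilon> < T N" for N
        using cINF_lower[OF bdd_T, of N] \<open>\<epsilon> > 0\<close> by (simp add: L_def)
      then have "\<exists>n\<in>{N..}. L - \<epsilon> < f n" for N
        unfolding T_def using bdd by (subst (asm) less_cSUP_iff) auto
      then show "frequently (\<lambda>n. f n > L - \<epsilon>) sequentially"
        unfolding frequently_sequentially by auto
    qed
  qed
qed

lemma bounded_seq_liminf_bounds:
  fixes f :: "nat \<Rightarrow> real"
  assumes "bdd_above (range f)" "bdd_below (range f)"
  obtains L where "\<forall>\<epsilon>>0. eventually (\<lambda>n. f n > L - \<epsilon>) sequentially"
    and "\<forall>\<epsilon>>0. frequently (\<lambda>n. f n < L + \<epsilon>) sequentially"
proof -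
  have "range (\<lambda>n. - f n) = uminus ` range f" by auto
  then have "bdd_above (range (\<lambda>n. - f n))" "bdd_below (range (\<lambda>n. - f n))"
    using assms by (simp_all add: bdd_above_uminus bdd_below_uminus)
  then obtain L where L: "\<forall>\<epsilon>>0. eventually (\<lambda>n. - f n < L + \<epsilon>) sequentially"
    "\<forall>\<epsilon>>0. frequently (\<lambda>n. - f n > L - \<epsilon>) sequentially"
    by (rule bounded_seq_limsup_bounds)
  show ?thesis
  proof (rule that[of "- L"]; intro allI impI)
    fix \<epsilon> :: real assume "\<epsilon> > 0"
    show "eventually (\<lambda>n. f n > - L - \<epsilon>) sequentially"
      using L(1)[rule_format, OF \<open>\<epsilon> > 0\<close>] by (rule eventually_mono) simp
    show "frequently (\<lambda>n. f n < - L + \<epsilon>) sequentially"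
      using L(2)[rule_format, OF \<open>\<epsilon> > 0\<close>] by (rule frequently_elim1) simp
  qed
qed


lemma le_of_eventually_bounds:
  fixes f :: "nat \<Rightarrow> real"
  assumes "\<forall>\<epsilon>>0. eventually (\<lambda>n. f n < L + \<epsilon>) sequentially"
    and "\<forall>\<epsilon>>0. eventually (\<lambda>n. f n > \<eta> - \<epsilon>) sequentially"
  shows "\<eta> \<le> L"
proof (rule ccontr)
  assume "\<not> \<eta> \<le> L"
  then have "eventually (\<lambda>n. f n < L + (\<eta> - L) / 2 \<and> f n > \<eta> - (\<eta> - L) / 2) sequentially"
    using assms by (intro eventually_conj) auto
  then obtain n where "f n < L + (\<eta> - L) / 2" "f n > \<eta> - (\<eta> - L) / 2"
    using eventually_happens'[OF sequentially_bot] by blast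
  moreover have "\<eta> - (\<eta> - L) / 2 = L + (\<eta> - L) / 2" by (simp add: field_simps)
  ultimately show False by linarith
qed

locale renewal =
  fixes \<mu> :: "nat pmf"
  assumes no_size_zero: "pmf \<mu> 0 = 0"
    and size_one_pos: "pmf \<mu> 1 > 0"
    and summable_mean: "summable (\<lambda>s. real s * pmf \<mu> s)"
begin

definition mean :: real where
  "mean = (\<Sum>s. real s * pmf \<mu> s)"

lemma mean_pos: "mean > 0"
proof -
  have "(\<Sum>s\<in>{1}. real s * pmf \<mu> s) \<le> mean"
    unfolding mean_def by (rule sum_le_suminf[OF summable_mean]) auto
  then show ?thesis using size_one_pos by simp
qed

lemma sum_tail_prob_tendsto: "(\<lambda>K. \<Sum>k=0..K. tail_prob \<mu> k) \<longlonglongrightarrow> mean"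
  using summable_LIMSEQ'[OF sums_summable[OF tail_prob_sums_mean[OF summable_mean]]]
    sums_unique[OF tail_prob_sums_mean[OF summable_mean]]
  by (simp add: atLeast0AtMost mean_def)

lemma sum_tail_prob_le: "finite S \<Longrightarrow> (\<Sum>k\<in>S. tail_prob \<mu> k) \<le> mean"
  using sum_le_suminf[OF sums_summable[OF tail_prob_sums_mean[OF summable_mean]]]
    sums_unique[OF tail_prob_sums_mean[OF summable_mean]] tail_prob_nonneg
  by (simp add: mean_def)

lemma ex_tail_prob_less:
  assumes "\<delta> > 0"
  shows "\<exists>J\<ge>1. tail_prob \<mu> J < \<delta>"
proof -
  obtain N where "\<forall>n\<ge>N. tail_prob \<mu> n < \<delta>"
    using order_tendstoD(2)[OF tail_prob_tendsto_0 assms] by (auto simp: eventually_sequentially)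
  then show ?thesis by (intro exI[of _ "N + 1"]) auto
qed

lemma renewal_tail_terms_le:
  assumes L: "0 \<le> L" and \<delta>: "0 < \<delta>"
    and below: "\<forall>k\<ge>N. renewal_seq \<mu> k < L + \<delta>" and M: "M \<ge> N + J"
  shows "(\<Sum>x=2..M. pmf \<mu> x * renewal_seq \<mu> (M - x)) \<le> (L + \<delta>) * (1 - pmf \<mu> 1) + tail_prob \<mu> J"
proof -
  have term_le: "pmf \<mu> x * renewal_seq \<mu> (M - x)
                   \<le> (L + \<delta>) * pmf \<mu> x + (if J < x then pmf \<mu> x else 0)" for x
  proof (cases "J < x")
    case True
    have "pmf \<mu> x * renewal_seq \<mu> (M - x) \<le> pmf \<mu> x"
      using mult_left_mono[OF renewal_seq_le_1[OF no_size_zero]] by simp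
    then show ?thesis using True L \<delta> by (simp add: add_increasing)
  next
    case False
    then have "renewal_seq \<mu> (M - x) < L + \<delta>" using below M by auto
    then show ?thesis
      using False mult_left_mono[of "renewal_seq \<mu> (M - x)" "L + \<delta>" "pmf \<mu> x"]
      by (simp add: mult.commute)
  qed
  have "(\<Sum>x=2..M. pmf \<mu> x * renewal_seq \<mu> (M - x))
          \<le> (\<Sum>x=2..M. (L + \<delta>) * pmf \<mu> x + (if J < x then pmf \<mu> x else 0))"
    by (rule sum_mono) (rule term_le)
  also have "\<dots> = (L + \<delta>) * (\<Sum>x=2..M. pmf \<mu> x) + (\<Sum>x=2..M. if J < x then pmf \<mu> x else 0)"
    by (simp add: sum.distrib sum_distrib_left)
  also have "(\<Sum>x=2..M. if J < x then pmf \<mu> x else 0) = (\<Sum>x\<in>{x\<in>{2..M}. J < x}. pmf \<mu> x)"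
    by (rule sum.inter_filter[symmetric]) simp
  also have "(\<Sum>x\<in>{x\<in>{2..M}. J < x}. pmf \<mu> x) \<le> (\<Sum>x\<in>{J<..M}. pmf \<mu> x)"
    by (rule sum_mono2) auto
  also have "\<dots> \<le> tail_prob \<mu> J" by (rule sum_pmf_greaterThanAtMost_le)
  also have "(L + \<delta>) * (\<Sum>x=2..M. pmf \<mu> x) \<le> (L + \<delta>) * (1 - pmf \<mu> 1)"
    using sum_pmf_from_2_le[of \<mu> M] L \<delta> by (intro mult_left_mono) auto
  finally show ?thesis by simp
qed

lemma renewal_tail_terms_ge:
  assumes L: "L \<le> 1" and \<delta>: "0 < \<delta>" and J: "J \<ge> 1"
    and above: "\<forall>k\<ge>N. renewal_seq \<mu> k > L - \<delta>" and M: "M \<ge> N + J"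
  shows "(\<Sum>x=2..M. pmf \<mu> x * renewal_seq \<mu> (M - x)) \<ge> (L - \<delta>) * (1 - pmf \<mu> 1) - tail_prob \<mu> J"
proof -
  define S where "S = (\<Sum>x=2..J. pmf \<mu> x)"
  have S: "S \<le> 1 - pmf \<mu> 1" "S \<ge> 1 - pmf \<mu> 1 - tail_prob \<mu> J"
    using sum_pmf_from_2_le[of \<mu> J] sum_pmf_from_2_ge[OF no_size_zero J] by (auto simp: S_def)
  have "(L - \<delta>) * S \<ge> (L - \<delta>) * (1 - pmf \<mu> 1) - tail_prob \<mu> J"
  proof (cases "L - \<delta> \<ge> 0")
    case True
    have "(L - \<delta>) * S \<ge> (L - \<delta>) * (1 - pmf \<mu> 1 - tail_prob \<mu> J)"
      using True S by (intro mult_left_mono) auto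
    moreover have "(L - \<delta>) * tail_prob \<mu> J \<le> tail_prob \<mu> J"
      using L \<delta> tail_prob_nonneg[of \<mu> J] mult_right_mono[of "L - \<delta>" 1 "tail_prob \<mu> J"] by simp
    ultimately show ?thesis by (simp add: algebra_simps)
  next
    case False
    then have "(L - \<delta>) * S \<ge> (L - \<delta>) * (1 - pmf \<mu> 1)" using S by (intro mult_left_mono_neg) auto
    then show ?thesis using tail_prob_nonneg[of \<mu> J] by simp
  qed
  also have "(L - \<delta>) * S = (\<Sum>x=2..J. pmf \<mu> x * (L - \<delta>))" by (simp add: S_def sum_distrib_left mult_ac)
  also have "\<dots> \<le> (\<Sum>x=2..J. pmf \<mu> x * renewal_seq \<mu> (M - x))"
    using above M by (intro sum_mono mult_left_mono) (auto simp: less_imp_le)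
  also have "\<dots> \<le> (\<Sum>x=2..M. pmf \<mu> x * renewal_seq \<mu> (M - x))"
    using M by (intro sum_mono2) (auto intro!: mult_nonneg_nonneg renewal_seq_nonneg)
  finally show ?thesis .
qed

text \<open>Aperiodicity enters only here: as \<open>\<mu>\<^sub>1 > 0\<close>, a value \<open>u\<^sub>M\<close> close to the upper limit \<open>L\<close>
  forces \<open>u\<^sub>M\<^sub>-\<^sub>1\<close> close to \<open>L\<close>, because in the renewal equation the remaining terms
  \<open>\<mu>\<^sub>x u\<^sub>M\<^sub>-\<^sub>x\<close> cannot compensate.\<close>

lemma renewal_seq_pred_above:
  assumes L: "0 \<le> L" and \<epsilon>: "0 < \<epsilon>"
    and tail: "tail_prob \<mu> J < pmf \<mu> 1 * \<epsilon> / 4"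
    and below: "\<forall>k\<ge>N. renewal_seq \<mu> k < L + pmf \<mu> 1 * \<epsilon> / 4"
    and M: "M \<ge> N + J + 1"
    and above: "renewal_seq \<mu> M > L - pmf \<mu> 1 * \<epsilon> / 4"
  shows "renewal_seq \<mu> (M - 1) > L - \<epsilon>"
proof -
  define c where "c = pmf \<mu> 1"
  define \<delta> where "\<delta> = c * \<epsilon> / 4"
  have c: "0 < c" using size_one_pos by (simp add: c_def)
  have \<delta>: "\<delta> > 0" using c \<epsilon> by (simp add: \<delta>_def)
  have "(\<Sum>x=2..M. pmf \<mu> x * renewal_seq \<mu> (M - x)) \<le> (L + \<delta>) * (1 - c) + tail_prob \<mu> J"
    unfolding c_def by (rule renewal_tail_terms_le[OF L \<delta>]) (use below M in \<open>auto simp: \<delta>_def c_def\<close>)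
  moreover have "L - \<delta> < c * renewal_seq \<mu> (M - 1) + (\<Sum>x=2..M. pmf \<mu> x * renewal_seq \<mu> (M - x))"
    using above M renewal_seq_rec_split[of M \<mu>] by (simp add: \<delta>_def c_def)
  moreover have "L - \<delta> - ((L + \<delta>) * (1 - c) + \<delta>) = c * L - 3 * \<delta> + c * \<delta>"
    by (simp add: algebra_simps)
  moreover have "c * (L - 3 * \<epsilon> / 4) = c * L - 3 * \<delta>"
    by (simp add: \<delta>_def algebra_simps)
  moreover have "c * \<delta> \<ge> 0" using c \<delta> by simp
  moreover have "tail_prob \<mu> J < \<delta>" using tail by (simp add: \<delta>_def c_def)
  ultimately have "c * (L - 3 * \<epsilon> / 4) < c * renewal_seq \<mu> (M - 1)" by linarith
  then show ?thesis using c \<epsilon> by simp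
qed

lemma renewal_seq_pred_below:
  assumes L: "L \<le> 1" and \<epsilon>: "0 < \<epsilon>" and J: "J \<ge> 1"
    and tail: "tail_prob \<mu> J < pmf \<mu> 1 * \<epsilon> / 4"
    and above: "\<forall>k\<ge>N. renewal_seq \<mu> k > L - pmf \<mu> 1 * \<epsilon> / 4"
    and M: "M \<ge> N + J + 1"
    and below: "renewal_seq \<mu> M < L + pmf \<mu> 1 * \<epsilon> / 4"
  shows "renewal_seq \<mu> (M - 1) < L + \<epsilon>"
proof -
  define c where "c = pmf \<mu> 1"
  define \<delta> where "\<delta> = c * \<epsilon> / 4"
  have c: "0 < c" "c \<le> 1" using size_one_pos pmf_le_1 by (auto simp: c_def)
  have \<delta>: "\<delta> > 0" using c \<epsilon> by (simp add: \<delta>_def)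
  have "(\<Sum>x=2..M. pmf \<mu> x * renewal_seq \<mu> (M - x)) \<ge> (L - \<delta>) * (1 - c) - tail_prob \<mu> J"
    unfolding c_def by (rule renewal_tail_terms_ge[OF L \<delta> J]) (use above M in \<open>auto simp: \<delta>_def c_def\<close>)
  moreover have "c * renewal_seq \<mu> (M - 1) + (\<Sum>x=2..M. pmf \<mu> x * renewal_seq \<mu> (M - x)) < L + \<delta>"
    using below M renewal_seq_rec_split[of M \<mu>] by (simp add: \<delta>_def c_def)
  moreover have "L + \<delta> - ((L - \<delta>) * (1 - c) - tail_prob \<mu> J) = c * L + \<delta> * (2 - c) + tail_prob \<mu> J"
    by (simp add: algebra_simps)
  moreover have "\<delta> * (2 - c) \<le> 2 * \<delta>" using c \<delta> by (simp add: algebra_simps)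
  moreover have "c * (L + 3 * \<epsilon> / 4) = c * L + 3 * \<delta>"
    by (simp add: \<delta>_def algebra_simps)
  moreover have "tail_prob \<mu> J < \<delta>" using tail by (simp add: \<delta>_def c_def)
  ultimately have "c * renewal_seq \<mu> (M - 1) < c * (L + 3 * \<epsilon> / 4)" by linarith
  then show ?thesis using c \<epsilon> by simp
qed

lemma renewal_seq_window_above:
  assumes below: "\<forall>\<epsilon>>0. eventually (\<lambda>n. renewal_seq \<mu> n < L + \<epsilon>) sequentially"
    and above: "\<forall>\<epsilon>>0. frequently (\<lambda>n. renewal_seq \<mu> n > L - \<epsilon>) sequentially"
    and L: "L \<ge> 0"
  shows "\<forall>\<epsilon>>0. frequently (\<lambda>n. \<forall>i\<le>j. renewal_seq \<mu> (n - i) > L - \<epsilon>) sequentially"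
proof (induction j)
  case 0
  then show ?case using above by simp
next
  case (Suc j)
  show ?case
  proof (intro allI impI)
    fix \<epsilon> :: real assume \<epsilon>: "\<epsilon> > 0"
    define \<delta> where "\<delta> = pmf \<mu> 1 * \<epsilon> / 4"
    have \<delta>: "\<delta> > 0" "\<delta> < \<epsilon>" using size_one_pos pmf_le_1[of \<mu> 1] \<epsilon> by (auto simp: \<delta>_def)
    obtain J where J: "tail_prob \<mu> J < \<delta>" using ex_tail_prob_less[OF \<delta>(1)] by auto
    obtain N where N: "\<forall>k\<ge>N. renewal_seq \<mu> k < L + \<delta>"
      using below \<delta>(1) by (auto simp: eventually_sequentially)
    have "frequently (\<lambda>n. (\<forall>i\<le>j. renewal_seq \<mu> (n - i) > L - \<delta>) \<and> n \<ge> N + J + j + 1) sequentially"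
      by (rule frequently_eventually_frequently[OF Suc.IH[rule_format, OF \<delta>(1)] eventually_ge_at_top])
    then show "frequently (\<lambda>n. \<forall>i\<le>Suc j. renewal_seq \<mu> (n - i) > L - \<epsilon>) sequentially"
    proof (rule frequently_elim1)
      fix n assume n: "(\<forall>i\<le>j. renewal_seq \<mu> (n - i) > L - \<delta>) \<and> n \<ge> N + J + j + 1"
      have "renewal_seq \<mu> (n - j - 1) > L - \<epsilon>"
        by (rule renewal_seq_pred_above[OF L \<epsilon>, of J N "n - j"]) (use J N n in \<open>auto simp: \<delta>_def\<close>)
      then have last: "renewal_seq \<mu> (n - Suc j) > L - \<epsilon>" by simp
      show "\<forall>i\<le>Suc j. renewal_seq \<mu> (n - i) > L - \<epsilon>"
      proof (intro allI impI)
        fix i assume "i \<le> Suc j"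
        then consider "i \<le> j" | "i = Suc j" by linarith
        then show "renewal_seq \<mu> (n - i) > L - \<epsilon>"
          using n last \<delta>(2) by cases force+
      qed
    qed
  qed
qed

lemma renewal_seq_window_below:
  assumes above: "\<forall>\<epsilon>>0. eventually (\<lambda>n. renewal_seq \<mu> n > L - \<epsilon>) sequentially"
    and below: "\<forall>\<epsilon>>0. frequently (\<lambda>n. renewal_seq \<mu> n < L + \<epsilon>) sequentially"
    and L: "L \<le> 1"
  shows "\<forall>\<epsilon>>0. frequently (\<lambda>n. \<forall>i\<le>j. renewal_seq \<mu> (n - i) < L + \<epsilon>) sequentially"
proof (induction j)
  case 0
  then show ?case using below by simp
next
  case (Suc j)
  show ?case
  proof (intro allI impI)
    fix \<epsilon> :: real assume \<epsilon>: "\<epsilon> > 0"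
    define \<delta> where "\<delta> = pmf \<mu> 1 * \<epsilon> / 4"
    have \<delta>: "\<delta> > 0" "\<delta> < \<epsilon>" using size_one_pos pmf_le_1[of \<mu> 1] \<epsilon> by (auto simp: \<delta>_def)
    obtain J where J: "J \<ge> 1" "tail_prob \<mu> J < \<delta>" using ex_tail_prob_less[OF \<delta>(1)] by auto
    obtain N where N: "\<forall>k\<ge>N. renewal_seq \<mu> k > L - \<delta>"
      using above \<delta>(1) by (auto simp: eventually_sequentially)
    have "frequently (\<lambda>n. (\<forall>i\<le>j. renewal_seq \<mu> (n - i) < L + \<delta>) \<and> n \<ge> N + J + j + 1) sequentially"
      by (rule frequently_eventually_frequently[OF Suc.IH[rule_format, OF \<delta>(1)] eventually_ge_at_top])
    then show "frequently (\<lambda>n. \<forall>i\<le>Suc j. renewal_seq \<mu> (n - i) < L + \<epsilon>) sequentially"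
    proof (rule frequently_elim1)
      fix n assume n: "(\<forall>i\<le>j. renewal_seq \<mu> (n - i) < L + \<delta>) \<and> n \<ge> N + J + j + 1"
      have "renewal_seq \<mu> (n - j - 1) < L + \<epsilon>"
        by (rule renewal_seq_pred_below[OF L \<epsilon> J(1), of N "n - j"]) (use J N n in \<open>auto simp: \<delta>_def\<close>)
      then have last: "renewal_seq \<mu> (n - Suc j) < L + \<epsilon>" by simp
      show "\<forall>i\<le>Suc j. renewal_seq \<mu> (n - i) < L + \<epsilon>"
      proof (intro allI impI)
        fix i assume "i \<le> Suc j"
        then consider "i \<le> j" | "i = Suc j" by linarith
        then show "renewal_seq \<mu> (n - i) < L + \<epsilon>"
          using n last \<delta>(2) by cases force+
      qed
    qed
  qed
qed


lemma renewal_window_above_bound: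
  assumes "n \<ge> K" "\<forall>i\<le>K. renewal_seq \<mu> (n - i) > a"
  shows "a * (\<Sum>k=0..K. tail_prob \<mu> k) \<le> 1"
proof -
  have "a * (\<Sum>k=0..K. tail_prob \<mu> k) = (\<Sum>k=0..K. tail_prob \<mu> k * a)"
    by (simp add: sum_distrib_left mult.commute)
  also have "\<dots> \<le> (\<Sum>k=0..K. tail_prob \<mu> k * renewal_seq \<mu> (n - k))"
    using assms(2) by (intro sum_mono mult_left_mono) (auto simp: tail_prob_nonneg less_imp_le)
  also have "\<dots> \<le> (\<Sum>k=0..n. tail_prob \<mu> k * renewal_seq \<mu> (n - k))"
    using assms(1) by (intro sum_mono2) (auto intro!: mult_nonneg_nonneg tail_prob_nonneg renewal_seq_nonneg)
  also have "\<dots> = 1" by (rule renewal_identity[OF no_size_zero])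
  finally show ?thesis .
qed

lemma renewal_window_below_bound:
  assumes "n \<ge> K" "\<forall>i\<le>K. renewal_seq \<mu> (n - i) < a"
  shows "1 \<le> a * (\<Sum>k=0..K. tail_prob \<mu> k) + (mean - (\<Sum>k=0..K. tail_prob \<mu> k))"
proof -
  have split: "{0..n} = {0..K} \<union> {K<..n}" using assms(1) by auto
  have "1 = (\<Sum>k=0..n. tail_prob \<mu> k * renewal_seq \<mu> (n - k))"
    by (rule renewal_identity[OF no_size_zero, symmetric])
  also have "\<dots> = (\<Sum>k=0..K. tail_prob \<mu> k * renewal_seq \<mu> (n - k))
                  + (\<Sum>k\<in>{K<..n}. tail_prob \<mu> k * renewal_seq \<mu> (n - k))"
    unfolding split by (rule sum.union_disjoint) auto
  also have "(\<Sum>k=0..K. tail_prob \<mu> k * renewal_seq \<mu> (n - k)) \<le> (\<Sum>k=0..K. tail_prob \<mu> k * a)"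
    using assms(2) by (intro sum_mono mult_left_mono) (auto simp: tail_prob_nonneg less_imp_le)
  also have "(\<Sum>k\<in>{K<..n}. tail_prob \<mu> k * renewal_seq \<mu> (n - k)) \<le> (\<Sum>k\<in>{K<..n}. tail_prob \<mu> k)"
    using renewal_seq_le_1[OF no_size_zero]
    by (intro sum_mono) (auto intro: mult_left_le tail_prob_nonneg)
  also have "(\<Sum>k\<in>{K<..n}. tail_prob \<mu> k) \<le> mean - (\<Sum>k=0..K. tail_prob \<mu> k)"
  proof -
    have "(\<Sum>k=0..K. tail_prob \<mu> k) + (\<Sum>k\<in>{K<..n}. tail_prob \<mu> k) = (\<Sum>k\<in>{0..K} \<union> {K<..n}. tail_prob \<mu> k)"
      by (rule sum.union_disjoint[symmetric]) auto
    with sum_tail_prob_le[of "{0..K} \<union> {K<..n}"] show ?thesis by simp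
  qed
  finally show ?thesis by (simp add: sum_distrib_left mult.commute)
qed

lemma limsup_renewal_seq_bound:
  assumes below: "\<forall>\<epsilon>>0. eventually (\<lambda>n. renewal_seq \<mu> n < L + \<epsilon>) sequentially"
    and above: "\<forall>\<epsilon>>0. frequently (\<lambda>n. renewal_seq \<mu> n > L - \<epsilon>) sequentially"
    and L: "L \<ge> 0"
  shows "L * mean \<le> 1"
proof -
  have "L * (\<Sum>k=0..K. tail_prob \<mu> k) \<le> 1" for K
  proof (rule field_le_epsilon)
    fix e :: real assume e: "e > 0"
    define R where "R = (\<Sum>k=0..K. tail_prob \<mu> k)"
    have R: "R \<ge> 0" unfolding R_def by (simp add: sum_nonneg tail_prob_nonneg)
    define \<epsilon> where "\<epsilon> = e / (R + 1)"
    have \<epsilon>: "\<epsilon> > 0" "\<epsilon> * R \<le> e" using e R by (simp_all add: \<epsilon>_def field_simps)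
    have "frequently (\<lambda>n. (\<forall>i\<le>K. renewal_seq \<mu> (n - i) > L - \<epsilon>) \<and> n \<ge> K) sequentially"
      by (rule frequently_eventually_frequently[OF _ eventually_ge_at_top])
         (use renewal_seq_window_above[OF below above L] \<epsilon> in blast)
    then obtain n where "n \<ge> K" "\<forall>i\<le>K. renewal_seq \<mu> (n - i) > L - \<epsilon>"
      by (auto dest: frequently_ex)
    then have "(L - \<epsilon>) * R \<le> 1" unfolding R_def by (rule renewal_window_above_bound)
    with \<epsilon> show "L * (\<Sum>k=0..K. tail_prob \<mu> k) \<le> 1 + e"
      by (simp add: R_def[symmetric] algebra_simps)
  qed
  then show ?thesis
    by (intro LIMSEQ_le_const2[OF tendsto_mult[OF tendsto_const sum_tail_prob_tendsto]]) auto
qed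

lemma liminf_renewal_seq_bound:
  assumes above: "\<forall>\<epsilon>>0. eventually (\<lambda>n. renewal_seq \<mu> n > L - \<epsilon>) sequentially"
    and below: "\<forall>\<epsilon>>0. frequently (\<lambda>n. renewal_seq \<mu> n < L + \<epsilon>) sequentially"
    and L: "L \<le> 1"
  shows "1 \<le> L * mean"
proof -
  have "1 \<le> L * (\<Sum>k=0..K. tail_prob \<mu> k) + (mean - (\<Sum>k=0..K. tail_prob \<mu> k))" for K
  proof (rule field_le_epsilon)
    fix e :: real assume e: "e > 0"
    define R where "R = (\<Sum>k=0..K. tail_prob \<mu> k)"
    have R: "R \<ge> 0" unfolding R_def by (simp add: sum_nonneg tail_prob_nonneg)
    define \<epsilon> where "\<epsilon> = e / (R + 1)"
    have \<epsilon>: "\<epsilon> > 0" "\<epsilon> * R \<le> e" using e R by (simp_all add: \<epsilon>_def field_simps)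
    have "frequently (\<lambda>n. (\<forall>i\<le>K. renewal_seq \<mu> (n - i) < L + \<epsilon>) \<and> n \<ge> K) sequentially"
      by (rule frequently_eventually_frequently[OF _ eventually_ge_at_top])
         (use renewal_seq_window_below[OF above below L] \<epsilon> in blast)
    then obtain n where "n \<ge> K" "\<forall>i\<le>K. renewal_seq \<mu> (n - i) < L + \<epsilon>"
      by (auto dest: frequently_ex)
    then have "1 \<le> (L + \<epsilon>) * R + (mean - R)" unfolding R_def by (rule renewal_window_below_bound)
    with \<epsilon> show "1 \<le> L * (\<Sum>k=0..K. tail_prob \<mu> k) + (mean - (\<Sum>k=0..K. tail_prob \<mu> k)) + e"
      by (simp add: R_def[symmetric] algebra_simps)
  qed
  moreover have "(\<lambda>K. L * (\<Sum>k=0..K. tail_prob \<mu> k) + (mean - (\<Sum>k=0..K. tail_prob \<mu> k)))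
                   \<longlonglongrightarrow> L * mean + (mean - mean)"
    by (intro tendsto_intros sum_tail_prob_tendsto)
  ultimately show ?thesis
    using LIMSEQ_le_const by fastforce
qed

theorem renewal_theorem: "renewal_seq \<mu> \<longlonglongrightarrow> 1 / mean"
proof -
  have bdd: "bdd_above (range (renewal_seq \<mu>))" "bdd_below (range (renewal_seq \<mu>))"
    using renewal_seq_le_1[OF no_size_zero] renewal_seq_nonneg
    by (auto intro: bdd_aboveI[of _ 1] bdd_belowI[of _ 0])
  obtain L where L_below: "\<forall>\<epsilon>>0. eventually (\<lambda>n. renewal_seq \<mu> n < L + \<epsilon>) sequentially"
    and L_above: "\<forall>\<epsilon>>0. frequently (\<lambda>n. renewal_seq \<mu> n > L - \<epsilon>) sequentially"
    using bounded_seq_limsup_bounds[OF bdd] by blast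
  obtain \<eta> where \<eta>_above: "\<forall>\<epsilon>>0. eventually (\<lambda>n. renewal_seq \<mu> n > \<eta> - \<epsilon>) sequentially"
    and \<eta>_below: "\<forall>\<epsilon>>0. frequently (\<lambda>n. renewal_seq \<mu> n < \<eta> + \<epsilon>) sequentially"
    using bounded_seq_liminf_bounds[OF bdd] by blast
  have "0 \<le> L"
    by (rule le_of_eventually_bounds[OF L_below])
       (auto intro!: always_eventually intro: less_le_trans[OF _ renewal_seq_nonneg])
  have "\<eta> \<le> 1"
    by (rule le_of_eventually_bounds[OF _ \<eta>_above])
       (auto intro!: always_eventually intro: le_less_trans[OF renewal_seq_le_1[OF no_size_zero]])
  have "\<eta> \<le> L" by (rule le_of_eventually_bounds[OF L_below \<eta>_above])
  have "L * mean \<le> 1" by (rule limsup_renewal_seq_bound[OF L_below L_above \<open>0 \<le> L\<close>])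
  moreover have "1 \<le> \<eta> * mean" by (rule liminf_renewal_seq_bound[OF \<eta>_above \<eta>_below \<open>\<eta> \<le> 1\<close>])
  moreover have "\<eta> * mean \<le> L * mean" using \<open>\<eta> \<le> L\<close> mean_pos by (simp add: mult_right_mono)
  ultimately have "L * mean = 1" "\<eta> * mean = 1" by linarith+
  then have "L = 1 / mean" "\<eta> = 1 / mean"
    using mean_pos by (simp_all add: field_simps)
  show ?thesis
  proof (rule order_tendstoI)
    fix a assume "a < 1 / mean"
    then show "eventually (\<lambda>n. a < renewal_seq \<mu> n) sequentially"
      using \<eta>_above[rule_format, of "1 / mean - a"] \<open>\<eta> = 1 / mean\<close> by simp
  next
    fix a assume "1 / mean < a"
    then show "eventually (\<lambda>n. renewal_seq \<mu> n < a) sequentially"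
      using L_below[rule_format, of "a - 1 / mean"] \<open>L = 1 / mean\<close> by simp
  qed
qed

end

section \<open>Convolutions of convergent sequences\<close>

lemma cesaro_abs_tendsto_0:
  fixes e :: "nat \<Rightarrow> real"
  assumes "e \<longlonglongrightarrow> 0"
  shows "(\<lambda>n. (\<Sum>i=0..n. \<bar>e i\<bar>) / real n) \<longlonglongrightarrow> 0"
proof (rule LIMSEQ_I)
  fix r :: real assume r: "r > 0"
  obtain N where N: "\<forall>n\<ge>N. norm (e n - 0) < r / 2" using LIMSEQ_D[OF assms, of "r/2"] r by auto
  define C where "C = (\<Sum>i<N. \<bar>e i\<bar>)"
  have C: "C \<ge> 0" unfolding C_def by (simp add: sum_nonneg)
  define no where "no = max N (nat \<lceil>2 * C / r\<rceil> + 3)"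
  show "\<exists>no. \<forall>n\<ge>no. norm ((\<Sum>i=0..n. \<bar>e i\<bar>) / real n - 0) < r"
  proof (intro exI[of _ no] allI impI)
    fix n assume n: "n \<ge> no"
    hence nN: "n \<ge> N" and n2: "real n \<ge> 2 * C / r + 2"
      unfolding no_def by (auto, linarith)
    have "2 * C / r \<ge> 0" using C r by simp
    hence npos: "real n > 0" using n2 by linarith
    have split: "{0..n} = {..<N} \<union> {N..n}" using nN by auto
    have "(\<Sum>i=0..n. \<bar>e i\<bar>) = C + (\<Sum>i=N..n. \<bar>e i\<bar>)"
      unfolding split C_def by (rule sum.union_disjoint) auto
    also have "(\<Sum>i=N..n. \<bar>e i\<bar>) \<le> (\<Sum>i=N..n. r / 2)"
      using N by (intro sum_mono) (auto intro: less_imp_le)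
    also have "\<dots> = real (Suc n - N) * (r / 2)" by simp
    also have "\<dots> \<le> real (Suc n) * (r / 2)" using r by (intro mult_right_mono) auto
    finally have le: "(\<Sum>i=0..n. \<bar>e i\<bar>) \<le> C + real (Suc n) * (r / 2)" by simp
    have "C + real (Suc n) * (r / 2) < r * real n"
    proof -
      have "2 * C + 2 * r \<le> r * real n" using n2 r by (simp add: field_simps)
      moreover have "real (Suc n) * (r / 2) = (r + r * real n) / 2" by (simp add: algebra_simps)
      ultimately show ?thesis using r by (simp add: field_simps)
    qed
    hence "(\<Sum>i=0..n. \<bar>e i\<bar>) < r * real n" using le by linarith
    hence "(\<Sum>i=0..n. \<bar>e i\<bar>) / real n < r" using npos by (simp add: field_simps)
    moreover have "(\<Sum>i=0..n. \<bar>e i\<bar>) / real n \<ge> 0" by (simp add: sum_nonneg)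
    ultimately show "norm ((\<Sum>i=0..n. \<bar>e i\<bar>) / real n - 0) < r" by simp
  qed
qed

lemma sum_reflect: "(\<Sum>i=0..n. f (n - i)) = (\<Sum>i=0..(n::nat). (f i :: real))"
  using sum.atLeastAtMost_rev[of "\<lambda>i. f (n - i)" 0 n] by simp

lemma convolution_deviation_le:
  fixes a b :: "nat \<Rightarrow> real"
  assumes B: "\<And>i. \<bar>b i\<bar> \<le> B"
  shows "\<bar>(\<Sum>i=0..n. a i * b (n - i)) - real (Suc n) * (\<alpha> * \<beta>)\<bar>
           \<le> B * (\<Sum>i=0..n. \<bar>a i - \<alpha>\<bar>) + \<bar>\<alpha>\<bar> * (\<Sum>i=0..n. \<bar>b i - \<beta>\<bar>)"
proof -
  have split: "(\<Sum>i=0..n. a i * b (n - i)) - real (Suc n) * (\<alpha> * \<beta>)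
      = (\<Sum>i=0..n. (a i - \<alpha>) * b (n - i)) + \<alpha> * (\<Sum>i=0..n. b (n - i) - \<beta>)"
    by (simp add: algebra_simps sum.distrib sum_subtractf sum_distrib_left)
  have "\<bar>\<Sum>i=0..n. (a i - \<alpha>) * b (n - i)\<bar> \<le> (\<Sum>i=0..n. B * \<bar>a i - \<alpha>\<bar>)"
    using B by (intro order_trans[OF sum_abs] sum_mono)
       (metis abs_ge_zero abs_mult mult.commute mult_left_mono)
  moreover have "\<bar>\<alpha> * (\<Sum>i=0..n. b (n - i) - \<beta>)\<bar> \<le> \<bar>\<alpha>\<bar> * (\<Sum>i=0..n. \<bar>b i - \<beta>\<bar>)"
    unfolding abs_mult sum_reflect[of "\<lambda>i. b i - \<beta>"] by (intro mult_left_mono sum_abs) auto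
  ultimately show ?thesis
    unfolding split by (simp add: sum_distrib_left)
qed

lemma convolution_over_n_tendsto:
  fixes a b :: "nat \<Rightarrow> real"
  assumes a: "a \<longlonglongrightarrow> \<alpha>" and b: "b \<longlonglongrightarrow> \<beta>" and B: "\<And>i. \<bar>b i\<bar> \<le> B"
  shows "(\<lambda>n. (\<Sum>i=0..n. a i * b (n - i)) / real n) \<longlonglongrightarrow> \<alpha> * \<beta>"
proof -
  define E where "E n = (\<Sum>i=0..n. a i * b (n - i)) - real (Suc n) * (\<alpha> * \<beta>)" for n
  have "(\<lambda>n. B * ((\<Sum>i=0..n. \<bar>a i - \<alpha>\<bar>) / real n) + \<bar>\<alpha>\<bar> * ((\<Sum>i=0..n. \<bar>b i - \<beta>\<bar>) / real n))
          \<longlonglongrightarrow> B * 0 + \<bar>\<alpha>\<bar> * 0"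
    using a b by (intro tendsto_intros cesaro_abs_tendsto_0) (simp_all add: LIM_zero)
  then have bound_tendsto: "(\<lambda>n. B * ((\<Sum>i=0..n. \<bar>a i - \<alpha>\<bar>) / real n)
                             + \<bar>\<alpha>\<bar> * ((\<Sum>i=0..n. \<bar>b i - \<beta>\<bar>) / real n)) \<longlonglongrightarrow> 0"
    by simp
  have "(\<lambda>n. E n / real n) \<longlonglongrightarrow> 0"
  proof (rule Lim_null_comparison[OF always_eventually bound_tendsto], intro allI)
    fix n
    have "\<bar>E n\<bar> / real n \<le> (B * (\<Sum>i=0..n. \<bar>a i - \<alpha>\<bar>) + \<bar>\<alpha>\<bar> * (\<Sum>i=0..n. \<bar>b i - \<beta>\<bar>)) / real n"
      unfolding E_def by (intro divide_right_mono convolution_deviation_le B) simp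
    then show "norm (E n / real n)
                 \<le> B * ((\<Sum>i=0..n. \<bar>a i - \<alpha>\<bar>) / real n) + \<bar>\<alpha>\<bar> * ((\<Sum>i=0..n. \<bar>b i - \<beta>\<bar>) / real n)"
      by (simp add: abs_divide add_divide_distrib)
  qed
  then have "(\<lambda>n. real (Suc n) / real n * (\<alpha> * \<beta>) + E n / real n) \<longlonglongrightarrow> 1 * (\<alpha> * \<beta>) + 0"
    by (intro tendsto_intros LIMSEQ_Suc_n_over_n)
  moreover have "real (Suc n) / real n * (\<alpha> * \<beta>) + E n / real n = (\<Sum>i=0..n. a i * b (n - i)) / real n" for n
    by (simp add: E_def add_divide_distrib[symmetric] diff_divide_distrib)
  ultimately show ?thesis by simp
qed

lemma weighted_convolution_deviation_le:
  fixes b e :: "nat \<Rightarrow> real"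
  assumes B: "\<And>i. \<bar>b i\<bar> \<le> B"
  shows "\<bar>(\<Sum>i=0..n. real i * (\<alpha> + e i) * b (n - i)) - \<alpha> * \<beta> * (\<Sum>i=0..n. real i)\<bar>
           \<le> real n * (\<bar>\<alpha>\<bar> * (\<Sum>i=0..n. \<bar>b i - \<beta>\<bar>) + B * (\<Sum>i=0..n. \<bar>e i\<bar>))"
proof -
  have split: "(\<Sum>i=0..n. real i * (\<alpha> + e i) * b (n - i)) - \<alpha> * \<beta> * (\<Sum>i=0..n. real i)
      = \<alpha> * (\<Sum>i=0..n. real i * (b (n - i) - \<beta>)) + (\<Sum>i=0..n. real i * e i * b (n - i))"
    by (simp add: algebra_simps sum.distrib sum_subtractf sum_distrib_left)
  have "\<bar>\<Sum>i=0..n. real i * (b (n - i) - \<beta>)\<bar> \<le> (\<Sum>i=0..n. real n * \<bar>b (n - i) - \<beta>\<bar>)"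
    by (intro order_trans[OF sum_abs] sum_mono) (auto simp: abs_mult intro!: mult_right_mono)
  also have "\<dots> = real n * (\<Sum>i=0..n. \<bar>b i - \<beta>\<bar>)"
    by (simp add: sum_distrib_left[symmetric] sum_reflect[of "\<lambda>i. \<bar>b i - \<beta>\<bar>"])
  finally have first: "\<bar>\<Sum>i=0..n. real i * (b (n - i) - \<beta>)\<bar> \<le> real n * (\<Sum>i=0..n. \<bar>b i - \<beta>\<bar>)" .
  have "\<bar>real i * e i * b (n - i)\<bar> \<le> real n * B * \<bar>e i\<bar>" if "i \<in> {0..n}" for i
  proof -
    have "\<bar>real i * e i * b (n - i)\<bar> = real i * (\<bar>e i\<bar> * \<bar>b (n - i)\<bar>)" by (simp add: abs_mult)
    also have "\<dots> \<le> real n * (\<bar>e i\<bar> * B)" using that B by (intro mult_mono mult_left_mono) auto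
    finally show ?thesis by (simp add: algebra_simps)
  qed
  then have "(\<Sum>i=0..n. \<bar>real i * e i * b (n - i)\<bar>) \<le> (\<Sum>i=0..n. real n * B * \<bar>e i\<bar>)"
    by (rule sum_mono)
  then have second: "\<bar>\<Sum>i=0..n. real i * e i * b (n - i)\<bar> \<le> real n * B * (\<Sum>i=0..n. \<bar>e i\<bar>)"
    by (simp add: sum_distrib_left order_trans[OF sum_abs])
  have "\<bar>\<alpha> * (\<Sum>i=0..n. real i * (b (n - i) - \<beta>)) + (\<Sum>i=0..n. real i * e i * b (n - i))\<bar>
          \<le> \<bar>\<alpha>\<bar> * \<bar>\<Sum>i=0..n. real i * (b (n - i) - \<beta>)\<bar> + \<bar>\<Sum>i=0..n. real i * e i * b (n - i)\<bar>"
    by (simp add: abs_mult[symmetric] abs_triangle_ineq)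
  also have "\<dots> \<le> \<bar>\<alpha>\<bar> * (real n * (\<Sum>i=0..n. \<bar>b i - \<beta>\<bar>)) + real n * B * (\<Sum>i=0..n. \<bar>e i\<bar>)"
    by (intro add_mono mult_left_mono first second) auto
  finally show ?thesis unfolding split by (simp add: algebra_simps)
qed

lemma convolution_over_n_squared_tendsto:
  fixes A b :: "nat \<Rightarrow> real"
  assumes A: "(\<lambda>n. A n / real n) \<longlonglongrightarrow> \<alpha>" and A0: "A 0 = 0"
    and b: "b \<longlonglongrightarrow> \<beta>" and B: "\<And>i. \<bar>b i\<bar> \<le> B"
  shows "(\<lambda>n. (\<Sum>i=0..n. A i * b (n - i)) / (real n)\<^sup>2) \<longlonglongrightarrow> \<alpha> * \<beta> / 2"
proof -
  define e where "e i = A i / real i - \<alpha>" for i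
  have A_eq: "A i = real i * (\<alpha> + e i)" for i
    by (cases "i = 0") (auto simp: e_def A0)
  define F where "F n = (\<Sum>i=0..n. A i * b (n - i)) - \<alpha> * \<beta> * (\<Sum>i=0..n. real i)" for n
  have "(\<lambda>n. \<bar>\<alpha>\<bar> * ((\<Sum>i=0..n. \<bar>b i - \<beta>\<bar>) / real n) + B * ((\<Sum>i=0..n. \<bar>e i\<bar>) / real n))
          \<longlonglongrightarrow> \<bar>\<alpha>\<bar> * 0 + B * 0"
    using A b by (intro tendsto_intros cesaro_abs_tendsto_0) (simp_all add: e_def LIM_zero)
  then have bound_tendsto: "(\<lambda>n. \<bar>\<alpha>\<bar> * ((\<Sum>i=0..n. \<bar>b i - \<beta>\<bar>) / real n)
                             + B * ((\<Sum>i=0..n. \<bar>e i\<bar>) / real n)) \<longlonglongrightarrow> 0"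
    by simp
  have "(\<lambda>n. F n / (real n)\<^sup>2) \<longlonglongrightarrow> 0"
  proof (rule Lim_null_comparison[OF always_eventually bound_tendsto], intro allI)
    fix n
    have "\<bar>F n\<bar> / (real n)\<^sup>2
            \<le> real n * (\<bar>\<alpha>\<bar> * (\<Sum>i=0..n. \<bar>b i - \<beta>\<bar>) + B * (\<Sum>i=0..n. \<bar>e i\<bar>)) / (real n)\<^sup>2"
      unfolding F_def A_eq by (intro divide_right_mono weighted_convolution_deviation_le B) auto
    then show "norm (F n / (real n)\<^sup>2)
                 \<le> \<bar>\<alpha>\<bar> * ((\<Sum>i=0..n. \<bar>b i - \<beta>\<bar>) / real n) + B * ((\<Sum>i=0..n. \<bar>e i\<bar>) / real n)"
      by (cases "n = 0") (simp_all add: abs_divide power2_eq_square field_simps)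
  qed
  then have "(\<lambda>n. \<alpha> * \<beta> / 2 * (real (Suc n) / real n) + F n / (real n)\<^sup>2) \<longlonglongrightarrow> \<alpha> * \<beta> / 2 * 1 + 0"
    by (intro tendsto_intros LIMSEQ_Suc_n_over_n)
  moreover have "eventually (\<lambda>n. \<alpha> * \<beta> / 2 * (real (Suc n) / real n) + F n / (real n)\<^sup>2
                   = (\<Sum>i=0..n. A i * b (n - i)) / (real n)\<^sup>2) sequentially"
  proof (rule eventually_mono[OF eventually_gt_at_top[of 0]])
    fix n :: nat assume "n > 0"
    moreover have "(\<Sum>i=0..n. real i) = real n * (real n + 1) / 2"
      using double_gauss_sum[of n, where 'a=real] by simp
    ultimately show "\<alpha> * \<beta> / 2 * (real (Suc n) / real n) + F n / (real n)\<^sup>2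
                       = (\<Sum>i=0..n. A i * b (n - i)) / (real n)\<^sup>2"
      unfolding F_def by (simp add: power2_eq_square field_simps)
  qed
  ultimately show ?thesis by (simp add: tendsto_cong)
qed

section \<open>Concentration of cluster counts\<close>

lemma sum_comp_weight_sq_deviation:
  "(\<Sum>xs\<in>compositions n. comp_weight \<mu> xs * (real (count_parts A xs) / real n - \<gamma>)\<^sup>2)
     = (count_moment \<mu> A n + 2 * pair_moment \<mu> A n) / (real n)\<^sup>2
       - 2 * \<gamma> * (count_moment \<mu> A n / real n) + \<gamma>\<^sup>2 * renewal_seq \<mu> n"
proof -
  have "comp_weight \<mu> xs * (real (count_parts A xs) / real n - \<gamma>)\<^sup>2
    = (comp_weight \<mu> xs * real (count_parts A xs) + 2 * (comp_weight \<mu> xs * real (count_part_pairs A xs)))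
        / (real n)\<^sup>2 - 2 * \<gamma> * (comp_weight \<mu> xs * real (count_parts A xs) / real n)
      + \<gamma>\<^sup>2 * comp_weight \<mu> xs" for xs
  proof -
    have "(real (count_parts A xs))\<^sup>2 = real (count_parts A xs) + 2 * real (count_part_pairs A xs)"
      using arg_cong[OF count_parts_squared[of A xs], of real] by simp
    then have sq: "(real (count_parts A xs) / real n - \<gamma>)\<^sup>2
        = (real (count_parts A xs) + 2 * real (count_part_pairs A xs)) / (real n)\<^sup>2
          - 2 * \<gamma> * (real (count_parts A xs) / real n) + \<gamma>\<^sup>2"
      by (simp add: power2_diff power_divide algebra_simps)
    show ?thesis unfolding sq by (simp add: algebra_simps add_divide_distrib)
  qed
  then show ?thesis
    unfolding count_moment_def pair_moment_def renewal_seq_def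
    by (simp add: sum.distrib sum_subtractf sum_divide_distrib[symmetric] sum_distrib_left[symmetric]
        sum_distrib_right[symmetric])
qed

lemma cond_sizes_deviation_prob_le:
  assumes "pmf \<mu> 1 > 0" "\<epsilon> > 0"
  shows "measure_pmf.prob (cond_sizes \<mu> n) {xs. \<bar>X xs - \<gamma>\<bar> > \<epsilon>}
           \<le> (\<Sum>xs\<in>compositions n. comp_weight \<mu> xs * (X xs - \<gamma>)\<^sup>2) / \<epsilon>\<^sup>2 / renewal_seq \<mu> n"
proof -
  let ?Bad = "compositions n \<inter> {xs. \<bar>X xs - \<gamma>\<bar> > \<epsilon>}"
  have "(\<Sum>xs\<in>?Bad. comp_weight \<mu> xs) \<le> (\<Sum>xs\<in>?Bad. comp_weight \<mu> xs * (X xs - \<gamma>)\<^sup>2 / \<epsilon>\<^sup>2)"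
  proof (rule sum_mono)
    fix xs assume "xs \<in> ?Bad"
    then have "\<epsilon>\<^sup>2 < \<bar>X xs - \<gamma>\<bar>\<^sup>2" using assms(2) by (intro power_strict_mono) auto
    then have "1 \<le> (X xs - \<gamma>)\<^sup>2 / \<epsilon>\<^sup>2" using assms(2) by simp
    from mult_left_mono[OF this comp_weight_nonneg]
    show "comp_weight \<mu> xs \<le> comp_weight \<mu> xs * (X xs - \<gamma>)\<^sup>2 / \<epsilon>\<^sup>2" by simp
  qed
  also have "\<dots> \<le> (\<Sum>xs\<in>compositions n. comp_weight \<mu> xs * (X xs - \<gamma>)\<^sup>2 / \<epsilon>\<^sup>2)"
    by (rule sum_mono2) (auto simp: finite_compositions comp_weight_nonneg)
  also have "\<dots> = (\<Sum>xs\<in>compositions n. comp_weight \<mu> xs * (X xs - \<gamma>)\<^sup>2) / \<epsilon>\<^sup>2"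
    by (simp add: sum_divide_distrib)
  finally have "(\<Sum>xs\<in>?Bad. comp_weight \<mu> xs) / renewal_seq \<mu> n
      \<le> (\<Sum>xs\<in>compositions n. comp_weight \<mu> xs * (X xs - \<gamma>)\<^sup>2) / \<epsilon>\<^sup>2 / renewal_seq \<mu> n"
    by (rule divide_right_mono) (use renewal_seq_pos[OF assms(1), of n] in simp)
  then show ?thesis by (simp add: prob_cond_sizes[OF assms(1)])
qed

context renewal
begin

lemma restricted_renewal_nonneg: "restricted_renewal \<mu> A n \<ge> 0"
  unfolding restricted_renewal_def by (intro sum_nonneg mult_nonneg_nonneg renewal_seq_nonneg) auto

lemma restricted_renewal_le_1: "restricted_renewal \<mu> A n \<le> 1"
proof -
  have "restricted_renewal \<mu> A n \<le> (\<Sum>x=0..n. pmf \<mu> x)"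
    unfolding restricted_renewal_def
    using renewal_seq_le_1[OF no_size_zero]
    by (intro sum_mono) (auto intro: mult_left_le)
  also have "\<dots> \<le> 1" by (rule sum_pmf_le_1) simp
  finally show ?thesis .
qed

lemma abs_restricted_renewal_le_1: "\<bar>restricted_renewal \<mu> A n\<bar> \<le> 1"
  using restricted_renewal_nonneg restricted_renewal_le_1 by (simp add: abs_le_iff)

lemma count_moment_over_n_tendsto:
  assumes "restricted_renewal \<mu> A \<longlonglongrightarrow> \<gamma>"
  shows "(\<lambda>n. count_moment \<mu> A n / real n) \<longlonglongrightarrow> 1 / mean * \<gamma>"
  unfolding count_moment_conv[OF no_size_zero]
  by (rule convolution_over_n_tendsto[OF renewal_theorem assms abs_restricted_renewal_le_1])

lemma pair_moment_over_n_squared_tendsto: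
  assumes "restricted_renewal \<mu> A \<longlonglongrightarrow> \<gamma>"
  shows "(\<lambda>n. pair_moment \<mu> A n / (real n)\<^sup>2) \<longlonglongrightarrow> 1 / mean * \<gamma> * \<gamma> / 2"
  unfolding pair_moment_conv[OF no_size_zero]
  by (rule convolution_over_n_squared_tendsto[OF count_moment_over_n_tendsto[OF assms] _ assms
        abs_restricted_renewal_le_1])
     (simp add: count_moment_def compositions_0)

text \<open>Second-moment method: the variance of \<open>count_parts A / n\<close> under \<open>cond_sizes \<mu> n\<close> vanishes
  because the first two moments grow like \<open>\<gamma> n / E S\<close> and \<open>(\<gamma> n)\<^sup>2 / (2 E S)\<close>.\<close>

lemma count_parts_concentration:
  assumes g: "restricted_renewal \<mu> A \<longlonglongrightarrow> \<gamma>" and \<epsilon>: "\<epsilon> > 0"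
  shows "(\<lambda>n. measure_pmf.prob (cond_sizes \<mu> n)
           {xs. \<bar>real (count_parts A xs) / real n - \<gamma>\<bar> > \<epsilon>}) \<longlonglongrightarrow> 0"
proof -
  define V where "V n = ((count_moment \<mu> A n / real n) * (1 / real n)
      + 2 * (pair_moment \<mu> A n / (real n)\<^sup>2) - 2 * \<gamma> * (count_moment \<mu> A n / real n))
      / renewal_seq \<mu> n + \<gamma>\<^sup>2" for n
  have "V \<longlonglongrightarrow> ((1 / mean * \<gamma>) * 0 + 2 * (1 / mean * \<gamma> * \<gamma> / 2) - 2 * \<gamma> * (1 / mean * \<gamma>))
                / (1 / mean) + \<gamma>\<^sup>2"
    unfolding V_def using mean_pos
    by (intro tendsto_intros count_moment_over_n_tendsto[OF g] pair_moment_over_n_squared_tendsto[OF g]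
        renewal_theorem lim_1_over_n) simp
  also have "((1 / mean * \<gamma>) * 0 + 2 * (1 / mean * \<gamma> * \<gamma> / 2) - 2 * \<gamma> * (1 / mean * \<gamma>))
                / (1 / mean) + \<gamma>\<^sup>2 = 0"
    using mean_pos by (simp add: field_simps power2_eq_square)
  finally have "(\<lambda>n. V n / \<epsilon>\<^sup>2) \<longlonglongrightarrow> 0 / \<epsilon>\<^sup>2"
    by (rule tendsto_divide[OF _ tendsto_const]) (use \<epsilon> in simp)
  then have V_tendsto: "(\<lambda>n. V n / \<epsilon>\<^sup>2) \<longlonglongrightarrow> 0" by simp
  have bound: "measure_pmf.prob (cond_sizes \<mu> n) {xs. \<bar>real (count_parts A xs) / real n - \<gamma>\<bar> > \<epsilon>}
                   \<le> V n / \<epsilon>\<^sup>2" for n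
  proof -
    have "measure_pmf.prob (cond_sizes \<mu> n) {xs. \<bar>real (count_parts A xs) / real n - \<gamma>\<bar> > \<epsilon>}
        \<le> (\<Sum>xs\<in>compositions n. comp_weight \<mu> xs * (real (count_parts A xs) / real n - \<gamma>)\<^sup>2)
            / \<epsilon>\<^sup>2 / renewal_seq \<mu> n"
      by (rule cond_sizes_deviation_prob_le[OF size_one_pos \<epsilon>])
    also have "\<dots> = ((count_moment \<mu> A n + 2 * pair_moment \<mu> A n) / (real n)\<^sup>2
       - 2 * \<gamma> * (count_moment \<mu> A n / real n) + \<gamma>\<^sup>2 * renewal_seq \<mu> n) / \<epsilon>\<^sup>2 / renewal_seq \<mu> n"
      unfolding sum_comp_weight_sq_deviation ..
    also have "\<dots> = V n / \<epsilon>\<^sup>2"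
      using renewal_seq_pos[OF size_one_pos, of n]
      by (simp add: V_def field_simps power2_eq_square add_divide_distrib)
    finally show ?thesis .
  qed
  show ?thesis
    by (rule tendsto_sandwich[OF _ _ tendsto_const V_tendsto]) (auto intro!: always_eventually bound)
qed

end

section \<open>Weak convergence of integer-valued laws\<close>

lemma eventually_sum_pmf_greater:
  fixes P :: "nat \<Rightarrow> 'a pmf" and Q :: "'a pmf"
  assumes lower: "\<And>k \<epsilon>. \<epsilon> > 0 \<Longrightarrow> eventually (\<lambda>n. pmf (P n) k > pmf Q k - \<epsilon>) sequentially"
    and "finite F" "\<eta> > 0"
  shows "eventually (\<lambda>n. (\<Sum>j\<in>F. pmf (P n) j) > (\<Sum>j\<in>F. pmf Q j) - \<eta>) sequentially"
  using assms(2,3)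
proof (induction F arbitrary: \<eta> rule: finite_induct)
  case empty
  then show ?case by simp
next
  case (insert x F)
  have "eventually (\<lambda>n. pmf (P n) x > pmf Q x - \<eta> / 2
          \<and> (\<Sum>j\<in>F. pmf (P n) j) > (\<Sum>j\<in>F. pmf Q j) - \<eta> / 2) sequentially"
    using insert.prems by (intro eventually_conj lower insert.IH) simp_all
  then show ?case
    by (rule eventually_mono) (use insert.hyps in simp)
qed

text \<open>Scheff\'e's lemma for laws on \<open>\<nat>\<close>: lower bounds on the point masses already force convergence,
  because no mass can be gained anywhere without losing it elsewhere.\<close>

lemma pmf_tendsto_of_lower_bounds:
  fixes P :: "nat \<Rightarrow> nat pmf" and Q :: "nat pmf"
  assumes lower: "\<And>k \<epsilon>. \<epsilon> > 0 \<Longrightarrow> eventually (\<lambda>n. pmf (P n) k > pmf Q k - \<epsilon>) sequentially"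
  shows "(\<lambda>n. pmf (P n) k) \<longlonglongrightarrow> pmf Q k"
proof (rule order_tendstoI)
  fix a assume "a < pmf Q k"
  then show "eventually (\<lambda>n. a < pmf (P n) k) sequentially"
    using lower[of "pmf Q k - a" k] by simp
next
  fix a assume a: "pmf Q k < a"
  define \<epsilon> where "\<epsilon> = a - pmf Q k"
  have \<epsilon>: "\<epsilon> > 0" using a by (simp add: \<epsilon>_def)
  obtain J0 where J0: "\<forall>J\<ge>J0. (\<Sum>j\<le>J. pmf Q j) > 1 - \<epsilon> / 2"
    using order_tendstoD(1)[OF sum_pmf_atMost_tendsto, of "1 - \<epsilon> / 2"] \<epsilon>
    by (auto simp: eventually_sequentially)
  define J where "J = J0 + k"
  define F where "F = {..J} - {k}"
  have split: "(\<Sum>j\<le>J. pmf M j) = pmf M k + (\<Sum>j\<in>F. pmf M j)" for M :: "nat pmf"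
    unfolding F_def J_def by (simp add: sum.remove[of "{..J0 + k}" k])
  have "eventually (\<lambda>n. (\<Sum>j\<in>F. pmf (P n) j) > (\<Sum>j\<in>F. pmf Q j) - \<epsilon> / 2) sequentially"
    using \<epsilon> by (intro eventually_sum_pmf_greater lower) (simp_all add: F_def)
  then show "eventually (\<lambda>n. pmf (P n) k < a) sequentially"
  proof (rule eventually_mono)
    fix n assume "(\<Sum>j\<in>F. pmf (P n) j) > (\<Sum>j\<in>F. pmf Q j) - \<epsilon> / 2"
    moreover have "(\<Sum>j\<le>J. pmf (P n) j) \<le> 1" by (rule sum_pmf_le_1) simp
    moreover have "(\<Sum>j\<le>J. pmf Q j) > 1 - \<epsilon> / 2" using J0 by (simp add: J_def)
    moreover have "a = pmf Q k + (\<epsilon> / 2 + \<epsilon> / 2)" by (simp add: \<epsilon>_def)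
    ultimately show "pmf (P n) k < a" unfolding split by linarith
  qed
qed

lemma cdf_distr_real_pmf:
  fixes M :: "nat pmf"
  shows "cdf (distr (measure_pmf M) borel real) x = (\<Sum>k\<in>{k. real k \<le> x}. pmf M k)"
proof -
  have fin: "finite {k::nat. real k \<le> x}"
    by (rule finite_subset[of _ "{..nat \<lceil>x\<rceil>}"]) (auto, linarith)
  have "cdf (distr (measure_pmf M) borel real) x = measure (measure_pmf M) (real -` {..x})"
    by (simp add: cdf_def measure_distr)
  also have "real -` {..x} = {k::nat. real k \<le> x}" by auto
  finally show ?thesis by (simp add: measure_measure_pmf_finite[OF fin])
qed

lemma weak_conv_m_of_pmf_tendsto:
  fixes P :: "nat \<Rightarrow> nat pmf" and Q :: "nat pmf"
  assumes "\<And>k. (\<lambda>n. pmf (P n) k) \<longlonglongrightarrow> pmf Q k"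
  shows "weak_conv_m (\<lambda>n. distr (measure_pmf (P n)) borel real) (distr (measure_pmf Q) borel real)"
  unfolding weak_conv_m_def weak_conv_def cdf_distr_real_pmf
  by (auto intro!: tendsto_sum assms)

lemma expectation_ge_of_exceptional_sets:
  fixes p :: "'a pmf"
  assumes "finite (set_pmf p)"
    and "\<And>x. x \<in> set_pmf p \<Longrightarrow> f x \<ge> c - indicator B x - indicator C x"
  shows "measure_pmf.expectation p f \<ge> c - measure_pmf.prob p B - measure_pmf.prob p C"
proof -
  have "measure_pmf.expectation p (\<lambda>x. c - indicator B x - indicator C x) \<le> measure_pmf.expectation p f"
    using assms by (intro integral_mono_AE) (auto intro!: integrable_measure_pmf_finite AE_pmfI)
  then show ?thesis
    using assms(1) by (simp add: integrable_measure_pmf_finite)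
qed

section \<open>Limits of cluster statistics\<close>

lemma ratio_lower_bound:
  fixes x y q c \<delta> :: real
  assumes x: "x \<ge> 0" and y: "y > 0" and c: "c > 0" and \<delta>: "\<delta> > 0" and q: "q \<le> 1"
  shows "x / y \<ge> (q * c - \<delta>) / (c + \<delta>)
           - (if \<bar>x - q * c\<bar> > \<delta> then 1 else 0) - (if \<bar>y - c\<bar> > \<delta> then 1 else 0)"
proof (cases "\<bar>x - q * c\<bar> > \<delta> \<or> \<bar>y - c\<bar> > \<delta>")
  case True
  have "q * c \<le> c" using q c by (simp add: mult_le_cancel_right1)
  then have "q * c - \<delta> \<le> c + \<delta>" using \<delta> by simp
  then have "(q * c - \<delta>) / (c + \<delta>) \<le> 1" using c \<delta> by (simp add: divide_le_eq_1)
  moreover have "x / y \<ge> 0" using x y by simp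
  ultimately show ?thesis using True by auto
next
  case False
  then have near: "x \<ge> q * c - \<delta>" "y \<le> c + \<delta>" by auto
  show ?thesis
  proof (cases "q * c - \<delta> \<le> 0")
    case True
    then have "(q * c - \<delta>) / (c + \<delta>) \<le> 0" using c \<delta> by (simp add: divide_nonpos_pos)
    moreover have "x / y \<ge> 0" using x y by simp
    ultimately show ?thesis using False by auto
  next
    case False
    have "(q * c - \<delta>) / (c + \<delta>) \<le> (q * c - \<delta>) / y"
      using False y near by (intro divide_left_mono) auto
    also have "\<dots> \<le> x / y" using near y by (intro divide_right_mono) auto
    finally show ?thesis using \<open>\<not> (\<bar>x - q * c\<bar> > \<delta> \<or> \<bar>y - c\<bar> > \<delta>)\<close> by auto
  qed
qed

lemma cluster_fraction_lower_bound:
  assumes "xs \<in> compositions n" "n \<ge> 1" "c > 0" "\<delta> > 0" "q \<le> 1"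
  shows "real (length (filter (\<lambda>x. x = k) xs)) / real (length xs)
           \<ge> (q * c - \<delta>) / (c + \<delta>)
             - indicator {xs. \<bar>real (count_parts {k} xs) / real n - q * c\<bar> > \<delta>} xs
             - indicator {xs. \<bar>real (count_parts UNIV xs) / real n - c\<bar> > \<delta>} xs"
proof -
  have "xs \<noteq> []" using assms(1,2) by (auto simp: compositions_def)
  then have "(real (count_parts {k} xs) / real n) / (real (count_parts UNIV xs) / real n)
      \<ge> (q * c - \<delta>) / (c + \<delta>)
         - (if \<bar>real (count_parts {k} xs) / real n - q * c\<bar> > \<delta> then 1 else 0)
         - (if \<bar>real (count_parts UNIV xs) / real n - c\<bar> > \<delta> then 1 else 0)"
    by (intro ratio_lower_bound) (use assms in \<open>auto simp: count_parts_def\<close>)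
  moreover have "real (length (filter (\<lambda>x. x = k) xs)) / real (length xs)
      = (real (count_parts {k} xs) / real n) / (real (count_parts UNIV xs) / real n)"
    using assms(2) by (simp add: count_parts_def)
  ultimately show ?thesis by (simp add: indicator_def of_bool_def)
qed

context renewal
begin

lemma restricted_renewal_singleton: "restricted_renewal \<mu> {k} (n + k) = pmf \<mu> k * renewal_seq \<mu> n"
proof -
  have "restricted_renewal \<mu> {k} (n + k) = (\<Sum>x=0..n+k. if x = k then pmf \<mu> k * renewal_seq \<mu> n else 0)"
    unfolding restricted_renewal_def by (rule sum.cong) auto
  also have "\<dots> = pmf \<mu> k * renewal_seq \<mu> n" by (simp add: sum.delta)
  finally show ?thesis .
qed

lemma restricted_renewal_singleton_tendsto: "restricted_renewal \<mu> {k} \<longlonglongrightarrow> pmf \<mu> k / mean"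
proof (rule LIMSEQ_offset[of _ k])
  have "(\<lambda>n. pmf \<mu> k * renewal_seq \<mu> n) \<longlonglongrightarrow> pmf \<mu> k * (1 / mean)"
    by (intro tendsto_intros renewal_theorem)
  then show "(\<lambda>n. restricted_renewal \<mu> {k} (n + k)) \<longlonglongrightarrow> pmf \<mu> k / mean"
    by (simp add: restricted_renewal_singleton)
qed

lemma restricted_renewal_UNIV: "n \<ge> 1 \<Longrightarrow> restricted_renewal \<mu> UNIV n = renewal_seq \<mu> n"
  unfolding restricted_renewal_def
  by (simp add: sum_atLeast0_eq_sum_atLeast1 no_size_zero renewal_seq_rec)

lemma restricted_renewal_UNIV_tendsto: "restricted_renewal \<mu> UNIV \<longlonglongrightarrow> 1 / mean"
proof (rule LIMSEQ_offset[of _ 1])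
  show "(\<lambda>n. restricted_renewal \<mu> UNIV (n + 1)) \<longlonglongrightarrow> 1 / mean"
    using LIMSEQ_ignore_initial_segment[OF renewal_theorem, of 1] by (simp add: restricted_renewal_UNIV)
qed

lemma cluster_count_conv_in_prob:
  "conv_in_prob_const
      (\<lambda>n. map_pmf (\<lambda>Q. real (card {B\<in>Q. card B = s}) / real n) (ESC n \<mu>)) (pmf \<mu> s / mean)"
  unfolding conv_in_prob_const_def
proof (intro allI impI)
  fix \<epsilon> :: real assume \<epsilon>: "\<epsilon> > 0"
  have "map_pmf (\<lambda>Q. real (card {B\<in>Q. card B = s}) / real n) (ESC n \<mu>)
          = map_pmf (\<lambda>xs. real (count_parts {s} xs) / real n) (cond_sizes \<mu> n)" for n
  proof (rule map_pmf_ESC[OF size_one_pos])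
    fix xs \<sigma> assume "xs \<in> compositions n" "\<sigma> permutes {1..n}"
    from card_blocks_with[OF this, of "\<lambda>x. x = s"]
    show "real (card {B\<in>partition_of n xs \<sigma>. card B = s}) / real n
            = real (count_parts {s} xs) / real n"
      by (simp add: count_parts_def)
  qed
  then show "(\<lambda>n. measure_pmf.prob (map_pmf (\<lambda>Q. real (card {B\<in>Q. card B = s}) / real n) (ESC n \<mu>))
               {x. \<epsilon> < \<bar>x - pmf \<mu> s / mean\<bar>}) \<longlonglongrightarrow> 0"
    using count_parts_concentration[OF restricted_renewal_singleton_tendsto \<epsilon>, of s]
    by (simp add: vimage_def)
qed

abbreviation uniform_cluster_size :: "nat \<Rightarrow> nat pmf" where
  "uniform_cluster_size n \<equiv> bind_pmf (ESC n \<mu>) (\<lambda>Q. map_pmf card (pmf_of_set Q))"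

lemma uniform_cluster_size_lower_bound:
  assumes \<epsilon>: "\<epsilon> > 0"
  shows "eventually (\<lambda>n. pmf (uniform_cluster_size n) k > pmf \<mu> k - \<epsilon>) sequentially"
proof -
  define q where "q = pmf \<mu> k"
  define c where "c = 1 / mean"
  have c: "c > 0" using mean_pos by (simp add: c_def)
  have q: "0 \<le> q" "q \<le> 1" by (auto simp: q_def pmf_le_1)
  define \<delta> where "\<delta> = \<epsilon> * c / 4"
  have \<delta>: "\<delta> > 0" using \<epsilon> c by (simp add: \<delta>_def)
  define L where "L = (q * c - \<delta>) / (c + \<delta>)"
  have "L - q = - (\<delta> * (1 + q)) / (c + \<delta>)" using c \<delta> by (simp add: L_def field_simps)
  moreover have "\<delta> * (1 + q) / (c + \<delta>) \<le> \<delta> * 2 / c"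
    using c \<delta> q by (intro frac_le mult_left_mono) auto
  moreover have "\<delta> * 2 / c = \<epsilon> / 2" using c by (simp add: \<delta>_def field_simps)
  ultimately have L: "L \<ge> q - \<epsilon> / 2" by simp
  define Bad\<^sub>k where "Bad\<^sub>k n = {xs. \<bar>real (count_parts {k} xs) / real n - q * c\<bar> > \<delta>}" for n
  define Bad where "Bad n = {xs. \<bar>real (count_parts UNIV xs) / real n - c\<bar> > \<delta>}" for n
  have "eventually (\<lambda>n. measure_pmf.prob (cond_sizes \<mu> n) (Bad\<^sub>k n) < \<epsilon> / 4) sequentially"
    using count_parts_concentration[OF restricted_renewal_singleton_tendsto \<delta>, of k] \<epsilon>
    by (intro order_tendstoD(2)) (auto simp: Bad\<^sub>k_def q_def c_def)
  moreover have "eventually (\<lambda>n. measure_pmf.prob (cond_sizes \<mu> n) (Bad n) < \<epsilon> / 4) sequentially"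
    using count_parts_concentration[OF restricted_renewal_UNIV_tendsto \<delta>] \<epsilon>
    by (intro order_tendstoD(2)) (auto simp: Bad_def c_def)
  ultimately show ?thesis
    using eventually_ge_at_top[of 1]
  proof eventually_elim
    case (elim n)
    have "real (length (filter (\<lambda>x. x = k) xs)) / real (length xs)
            \<ge> L - indicator (Bad\<^sub>k n) xs - indicator (Bad n) xs" if "xs \<in> compositions n" for xs
      unfolding L_def Bad\<^sub>k_def Bad_def
      by (rule cluster_fraction_lower_bound[OF that elim(3) c \<delta> q(2)])
    then have "pmf (uniform_cluster_size n) k
                 \<ge> L - measure_pmf.prob (cond_sizes \<mu> n) (Bad\<^sub>k n) - measure_pmf.prob (cond_sizes \<mu> n) (Bad n)"
      unfolding pmf_uniform_cluster_size[OF size_one_pos elim(3)]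
      using set_pmf_cond_sizes[OF size_one_pos, of n] finite_compositions[of n]
      by (intro expectation_ge_of_exceptional_sets) (auto intro: finite_subset)
    with elim(1,2) L show ?case by (simp add: q_def)
  qed
qed

lemma uniform_cluster_size_weak_conv:
  "weak_conv_m (\<lambda>n. distr (measure_pmf (uniform_cluster_size n)) borel real)
     (distr (measure_pmf \<mu>) borel real)"
  by (intro weak_conv_m_of_pmf_tendsto pmf_tendsto_of_lower_bounds uniform_cluster_size_lower_bound)

end

theorem theorem2:
  fixes \<mu> :: "nat pmf"
  assumes "pmf \<mu> 0 = 0"
    and "pmf \<mu> 1 > 0"
    and "summable (\<lambda>s. real s * pmf \<mu> s)"
  shows "(\<forall>s\<ge>1. conv_in_prob_const
            (\<lambda>n. map_pmf (\<lambda>Q. real (card {B\<in>Q. card B = s}) / real n) (ESC n \<mu>))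
            (pmf \<mu> s / (\<Sum>l. real l * pmf \<mu> l)))
       \<and> weak_conv_m
            (\<lambda>n. distr (measure_pmf (bind_pmf (ESC n \<mu>) (\<lambda>Q. map_pmf card (pmf_of_set Q))))
                    borel real)
            (distr (measure_pmf \<mu>) borel real)"
proof -
  interpret renewal \<mu> using assms by unfold_locales
  show ?thesis
    using cluster_count_conv_in_prob uniform_cluster_size_weak_conv unfolding mean_def by blast
qed

end
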